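(* Let $p\ge 4$ and let $\langle S_0,S_1,\dots,S_p,S_{p+1}\rangle$ be a partition of $V$ with $S_0=\{0\}$, $S_{p+1}=\{n\}$, and $|S_i|\ge 2$ for $i=1,\dots,p$ (so in particular $p\le n-1$). The jump inequality $$\sum_{i=0}^{p-1}\sum_{j=i+2}^{p+1}x((S_i:S_j))-x((S_{p-1}\cup S_p:S_1\cup S_2))\ge 1$$ is valid for $P^p_{0,n}(D)$ and defines a facet of $P^p_{0,n}(D)$.
   Context: Let $n$ be a positive integer, $V=\{0,1,\dots,n\}$, and let $D=(V,A)$ be the digraph whose arc set $A$ consists of all ordered pairs $(i,j)$ with $i\neq j$, $i,j\in V$, except that no arc enters node $0$, no arc leaves node $n$, and the arc $(0,n)$ is absent. A $(0,n)$-$p$-path is a simple directed path in $D$ from $0$ to $n$ with exactly $p$ arcs. $P^p_{0,n}(D)\subseteq\mathbb{R}^A$ is the convex hull of the incidence vectors of all $(0,n)$-$p$-paths. For $F\subseteq A$, $x(F)=\sum_{(i,j)\in F}x_{ij}$. For node sets $S,T$, $(S:T)=\{(i,j)\in A: i\in S, j\in T\}$. *)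

theory Defs
  imports "HOL-Analysis.Analysis" "HOL-Library.Function_Algebras"
begin

text \<open>Real-valued functions on an arbitrary index type form a real vector space
  (pointwise operations). Points of R^A are represented as functions on arc pairs
  that vanish outside A.\<close>

instantiation "fun" :: (type, real_vector) real_vector
begin
definition scaleR_fun :: "real \<Rightarrow> ('a \<Rightarrow> 'b) \<Rightarrow> 'a \<Rightarrow> 'b" where
  "scaleR_fun c f = (\<lambda>x. c *\<^sub>R f x)"
instance
  by standard (auto simp: scaleR_fun_def fun_eq_iff scaleR_add_right scaleR_add_left)
end

definition arcs :: "nat \<Rightarrow> (nat \<times> nat) set" where
  "arcs n = {(i, j). i \<le> n \<and> j \<le> n \<and> i \<noteq> j \<and> j \<noteq> 0 \<and> i \<noteq> n \<and> (i, j) \<noteq> (0, n)}"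

definition arcs_between :: "nat \<Rightarrow> nat set \<Rightarrow> nat set \<Rightarrow> (nat \<times> nat) set" where
  "arcs_between n S T = {(i, j) \<in> arcs n. i \<in> S \<and> j \<in> T}"

definition xsum :: "((nat \<times> nat) \<Rightarrow> real) \<Rightarrow> (nat \<times> nat) set \<Rightarrow> real" where
  "xsum x F = (\<Sum>a\<in>F. x a)"

definition is_pPath :: "nat \<Rightarrow> nat \<Rightarrow> nat list \<Rightarrow> bool" where
  "is_pPath n p vs \<longleftrightarrow> length vs = p + 1 \<and> distinct vs \<and> hd vs = 0 \<and> last vs = n \<and>
     (\<forall>k<p. (vs ! k, vs ! (k + 1)) \<in> arcs n)"

definition incidence :: "nat list \<Rightarrow> (nat \<times> nat) \<Rightarrow> real" where
  "incidence vs = (\<lambda>a. if a \<in> set (zip vs (tl vs)) then 1 else 0)"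

definition pathPolytope :: "nat \<Rightarrow> nat \<Rightarrow> ((nat \<times> nat) \<Rightarrow> real) set" where
  "pathPolytope n p = convex hull {incidence vs | vs. is_pPath n p vs}"

definition adim :: "('a::real_vector) set \<Rightarrow> int" where
  "adim S = (if S = {} then -1 else int (dim {x - y | x y. x \<in> S \<and> y \<in> S}))"

definition is_facet :: "('a::real_vector) set \<Rightarrow> 'a set \<Rightarrow> bool" where
  "is_facet F P \<longleftrightarrow> F face_of P \<and> adim F = adim P - 1"

definition jump_lhs :: "nat \<Rightarrow> nat \<Rightarrow> (nat \<Rightarrow> nat set) \<Rightarrow> ((nat \<times> nat) \<Rightarrow> real) \<Rightarrow> real" where
  "jump_lhs n p S x =
     (\<Sum>i<p. \<Sum>j\<in>{i+2..p+1}. xsum x (arcs_between n (S i) (S j)))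
     - xsum x (arcs_between n (S (p - 1) \<union> S p) (S 1 \<union> S 2))"

end

theory Submission
  imports Defs
begin

text \<open>
  Validity: a \<open>(0,n)\<close>-\<open>p\<close>-path has \<open>p\<close> arcs to climb from layer \<open>0\<close> to layer \<open>p + 1\<close>.
  Tracking whether the path is ahead of the schedule of one layer per arc shows that its jump
  count (arcs skipping at least one layer, minus arcs from \<open>S (p - 1) \<union> S p\<close> back to
  \<open>S 1 \<union> S 2\<close>) is at least 1.

  Facet: tight and non-tight paths exist, so it suffices that every linear functional which is
  constant on the tight path vectors is an affine function of the jump functional on all path
  vectors. Such a functional is an arc weight; normalising it by a node potential, a constant
  per arc and a multiple of the jump coefficients makes it vanish on a spanning tree and on two
  further arcs, and comparing suitable tight paths then shows that it vanishes on every arc.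
\<close>

section \<open>Sums over consecutive pairs\<close>

fun adj_sum :: "('a \<Rightarrow> 'a \<Rightarrow> real) \<Rightarrow> 'a list \<Rightarrow> real" where
  "adj_sum f (x # y # zs) = f x y + adj_sum f (y # zs)"
| "adj_sum f _ = 0"

lemma adj_sum_conv_sum_nth: "adj_sum f xs = (\<Sum>k<length xs - 1. f (xs ! k) (xs ! Suc k))"
proof (induction f xs rule: adj_sum.induct)
  case (1 f x y zs)
  then show ?case
    by (simp add: sum.lessThan_Suc_shift del: sum.lessThan_Suc)
qed auto

lemma adj_sum_Cons: "adj_sum f (x # ys) = (if ys = [] then 0 else f x (hd ys) + adj_sum f ys)"
  by (cases ys) auto

lemma adj_sum_append:
  "xs \<noteq> [] \<Longrightarrow> ys \<noteq> [] \<Longrightarrow> adj_sum f (xs @ ys) = adj_sum f xs + f (last xs) (hd ys) + adj_sum f ys"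
  by (induction xs) (auto simp: adj_sum_Cons)

lemma adj_sum_map: "adj_sum f (map g xs) = adj_sum (\<lambda>a b. f (g a) (g b)) xs"
  by (induction "\<lambda>a b. f (g a) (g b)" xs rule: adj_sum.induct) auto

lemma adj_sum_cong:
  "(\<And>k. Suc k < length xs \<Longrightarrow> f (xs ! k) (xs ! Suc k) = g (xs ! k) (xs ! Suc k))
    \<Longrightarrow> adj_sum f xs = adj_sum g xs"
  by (simp add: adj_sum_conv_sum_nth)

lemma adj_sum_add: "adj_sum (\<lambda>a b. f a b + g a b) xs = adj_sum f xs + adj_sum g xs"
  by (induction "\<lambda>a b. f a b + g a b" xs rule: adj_sum.induct) auto

lemma adj_sum_cmult: "adj_sum (\<lambda>a b. c * f a b) xs = c * adj_sum f xs"
  by (induction "\<lambda>a b. c * f a b" xs rule: adj_sum.induct) (auto simp: algebra_simps)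

lemma adj_sum_const: "adj_sum (\<lambda>a b. c) xs = c * (length xs - 1)"
  by (induction "\<lambda>(a::'a) (b::'a). c" xs rule: adj_sum.induct) (auto simp: algebra_simps)

lemma adj_sum_telescope: "xs \<noteq> [] \<Longrightarrow> adj_sum (\<lambda>a b. g b - g a) xs = g (last xs) - g (hd xs)"
  by (induction "\<lambda>a b. g b - g a" xs rule: adj_sum.induct) auto

lemma adj_sum_upt: "adj_sum f (map g [a..<b]) = (\<Sum>t = a..<b - 1. f (g t) (g (Suc t)))"
proof (induction b)
  case (Suc b)
  show ?case
  proof (cases "a < b")
    case True
    then have "adj_sum f (map g [a..<Suc b]) = adj_sum f (map g [a..<b]) + f (g (b - 1)) (g b)"
      by (simp add: adj_sum_append last_map)
    with Suc True show ?thesis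
      by (cases b) (auto simp: sum.atLeastLessThan_Suc)
  qed (cases "a = b"; simp)
qed simp

section \<open>Facets of convex hulls of finite sets\<close>

lemma convex_hull_linear_ge:
  assumes "linear L" "\<And>x. x \<in> X \<Longrightarrow> b \<le> L x" "x \<in> convex hull X"
  shows "b \<le> (L x :: real)"
proof -
  have "convex hull (L ` X) \<subseteq> {b..}"
    using assms(2) by (intro hull_minimal) auto
  then show ?thesis
    using assms(3) convex_hull_linear_image[OF assms(1), of X] by auto
qed

lemma face_of_linear_level:
  assumes "convex C" "linear L" and ge: "\<And>x. x \<in> C \<Longrightarrow> b \<le> (L x :: real)"
  shows "{x \<in> C. L x = b} face_of C"
  unfolding face_of_def
proof (intro conjI ballI impI)
  have "{x \<in> C. L x = b} = C \<inter> L -` {b}" by auto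
  then show "convex {x \<in> C. L x = b}"
    using assms(1,2) by (simp add: convex_Int convex_linear_vimage)
next
  fix u v x assume u: "u \<in> C" and v: "v \<in> C" and x: "x \<in> {x \<in> C. L x = b}"
    and seg: "x \<in> open_segment u v"
  obtain t where t: "0 < t" "t < 1" "x = (1 - t) *\<^sub>R u + t *\<^sub>R v"
    using seg by (auto simp: in_segment)
  have "L x = (1 - t) * L u + t * L v"
    using t(3) assms(2) by (simp add: linear_add linear_scale)
  then have "(1 - t) * (L u - b) + t * (L v - b) = 0"
    using x by (simp add: algebra_simps)
  moreover have "0 \<le> (1 - t) * (L u - b)" "0 \<le> t * (L v - b)"
    using ge u v t(1,2) by simp_all
  ultimately have "(1 - t) * (L u - b) = 0" "t * (L v - b) = 0"
    by linarith+
  then have "L u = b \<and> L v = b"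
    using t(1,2) by simp
  then show "u \<in> {x \<in> C. L x = b}" "v \<in> {x \<in> C. L x = b}" using u v by auto
qed auto

lemma adim_eq_dim_translation:
  assumes "a \<in> S"
  shows "adim S = int (dim ((\<lambda>x. x - a) ` S))"
proof -
  have "span {x - y | x y. x \<in> S \<and> y \<in> S} = span ((\<lambda>x. x - a) ` S)"
  proof (rule span_eq[THEN iffD2], intro conjI subsetI)
    fix d assume "d \<in> {x - y | x y. x \<in> S \<and> y \<in> S}"
    then obtain x y where xy: "x \<in> S" "y \<in> S" and d: "d = (x - a) - (y - a)" by auto
    have "x - a \<in> span ((\<lambda>x. x - a) ` S)" "y - a \<in> span ((\<lambda>x. x - a) ` S)"
      using xy by (auto intro: span_base)
    then show "d \<in> span ((\<lambda>x. x - a) ` S)" unfolding d by (rule span_diff)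
  next
    fix d assume "d \<in> (\<lambda>x. x - a) ` S"
    then show "d \<in> span {x - y | x y. x \<in> S \<and> y \<in> S}"
      using assms by (auto intro: span_base)
  qed
  then show ?thesis
    using assms unfolding adim_def by (auto dest: span_eq_dim)
qed

lemma convex_hull_translation_in_span:
  assumes "x \<in> convex hull X"
  shows "x - a \<in> span ((\<lambda>x. x - a) ` X)"
proof -
  have "convex {x. x - a \<in> span ((\<lambda>x. x - a) ` X)}"
    unfolding convex_def
  proof (intro allI impI ballI; clarify)
    fix x y :: 'a and u v :: real
    assume "x - a \<in> span ((\<lambda>x. x - a) ` X)" "y - a \<in> span ((\<lambda>x. x - a) ` X)" "u + v = 1"
    moreover have "u *\<^sub>R x + v *\<^sub>R y - a = u *\<^sub>R (x - a) + v *\<^sub>R (y - a)"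
      using \<open>u + v = 1\<close> by (simp add: algebra_simps flip: scaleR_add_left)
    ultimately show "u *\<^sub>R x + v *\<^sub>R y - a \<in> span ((\<lambda>x. x - a) ` X)"
      by (simp add: span_add span_scale)
  qed
  then have "convex hull X \<subseteq> {x. x - a \<in> span ((\<lambda>x. x - a) ` X)}"
    by (intro hull_minimal) (auto intro: span_base)
  then show ?thesis using assms by auto
qed

lemma linear_functional_outside_span:
  fixes v :: "'a::real_vector"
  assumes "v \<notin> span B"
  obtains g :: "'a \<Rightarrow> real" where "linear g" "\<And>b. b \<in> B \<Longrightarrow> g b = 0" "g v = 1"
proof -
  obtain B' where B': "B' \<subseteq> B" "independent B'" "B \<subseteq> span B'"
    using maximal_independent_subset[of B] by blast
  have "v \<notin> span B'"
    using assms span_mono[OF B'(1)] by blast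
  then have "independent (insert v B')"
    using B'(2) by (rule independent_insertI)
  then obtain g :: "'a \<Rightarrow> real"
    where g: "linear g" "\<And>x. x \<in> insert v B' \<Longrightarrow> g x = (if x = v then 1 else 0)"
    using linear_independent_extend[of "insert v B'" "\<lambda>x. if x = v then 1 else 0"] by blast
  have "g x = 0" if "x \<in> B'" for x
    using g(2)[of x] that \<open>v \<notin> span B'\<close> span_base by fastforce
  then have "g b = 0" if "b \<in> B" for b
    using linear_eq_0_on_span[OF g(1)] B'(3) that by blast
  then show ?thesis
    using that g by simp
qed

lemma dim_insert_outside_span:
  fixes v :: "'a::real_vector"
  assumes "finite B" "v \<notin> span B"
  shows "dim (insert v B) = Suc (dim B)"
proof -
  obtain B' where B': "B' \<subseteq> B" "independent B'" "B \<subseteq> span B'" "card B' = dim B"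
    using basis_exists[of B] by blast
  have "span B' = span B"
    using B'(1,3) by (simp add: span_eq span_superset subset_trans)
  then have "independent (insert v B')" "v \<notin> B'"
    using assms(2) B'(2) independent_insertI span_base by metis+
  moreover have "span (insert v B) = span (insert v B')"
    using \<open>span B' = span B\<close> by (simp add: span_insert)
  ultimately show ?thesis
    using B'(4) finite_subset[OF B'(1) assms(1)]
    by (metis card_insert_disjoint dim_eq_card_independent span_eq_dim)
qed

lemma dim_translation_level_subset:
  fixes L :: "'a::real_vector \<Rightarrow> real"
  assumes L: "linear L" and T: "finite T" "T \<subseteq> (\<lambda>x. x - a) ` F"
    and F: "F \<subseteq> C" "\<And>x. x \<in> F \<Longrightarrow> L x = L a"
    and d: "d \<in> (\<lambda>x. x - a) ` C" "L d \<noteq> 0"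
    and C: "(\<lambda>x. x - a) ` C \<subseteq> span (insert d T)"
  shows "dim ((\<lambda>x. x - a) ` C) = Suc (dim ((\<lambda>x. x - a) ` F))"
proof -
  have L_T: "L u = 0" if "u \<in> span T" for u
  proof (rule linear_eq_0_on_span[OF L _ that])
    fix t assume "t \<in> T"
    then obtain x where "x \<in> F" "t = x - a" using T(2) by auto
    then show "L t = 0" using F(2) L by (simp add: linear_diff)
  qed
  have F_span: "(\<lambda>x. x - a) ` F \<subseteq> span T"
  proof (rule image_subsetI)
    fix x assume x: "x \<in> F"
    then have "x - a \<in> span (insert d T)" using C F(1) by blast
    then obtain k where k: "x - a - k *\<^sub>R d \<in> span T"
      by (auto simp: span_breakdown_eq)
    have "L (x - a - k *\<^sub>R d) = - k * L d"
      using x F(2) L by (simp add: linear_diff linear_scale)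
    then have "k = 0" using L_T[OF k] d(2) by simp
    then show "x - a \<in> span T" using k by simp
  qed
  have "T \<subseteq> span ((\<lambda>x. x - a) ` F)"
    using T(2) span_superset by (rule subset_trans)
  then have dim_F: "dim T = dim ((\<lambda>x. x - a) ` F)"
    using F_span by (intro span_eq_dim) (simp add: span_eq)
  have "insert d T \<subseteq> (\<lambda>x. x - a) ` C"
    using d(1) T(2) F(1) by auto
  then have "insert d T \<subseteq> span ((\<lambda>x. x - a) ` C)"
    using span_superset by (rule subset_trans)
  then have "dim ((\<lambda>x. x - a) ` C) = dim (insert d T)"
    using C by (intro span_eq_dim) (simp add: span_eq)
  also have "\<dots> = Suc (dim T)"
    using T(1) L_T d(2) by (intro dim_insert_outside_span) auto
  finally show ?thesis
    using dim_F by simp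
qed

lemma is_facet_convex_hull_level:
  fixes X :: "'a::real_vector set" and L :: "'a \<Rightarrow> real"
  assumes X: "finite X" and L: "linear L" and ge: "\<And>x. x \<in> X \<Longrightarrow> 1 \<le> L x"
    and x1: "x1 \<in> X" "L x1 = 1" and x2: "x2 \<in> X" "L x2 \<noteq> 1"
    and eqns: "\<And>g. linear g \<Longrightarrow> (\<And>x. x \<in> X \<Longrightarrow> L x = 1 \<Longrightarrow> g x = g x1)
      \<Longrightarrow> \<exists>\<beta>. \<forall>x\<in>X. g x = g x1 + \<beta> * (L x - 1)"
  shows "is_facet {x \<in> convex hull X. L x = 1} (convex hull X)"
proof -
  let ?C = "convex hull X" and ?F = "{x \<in> convex hull X. L x = 1}"
  define T where "T = (\<lambda>x. x - x1) ` {x \<in> X. L x = 1}"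
  define d where "d = x2 - x1"
  have vertex_span: "z - x1 \<in> span (insert d T)" if z: "z \<in> X" for z
  proof (rule ccontr)
    assume "z - x1 \<notin> span (insert d T)"
    then obtain g :: "'a \<Rightarrow> real"
      where g: "linear g" "\<And>b. b \<in> insert d T \<Longrightarrow> g b = 0" "g (z - x1) = 1"
      by (blast intro: linear_functional_outside_span)
    have "g x = g x1" if "x \<in> X" "L x = 1" for x
    proof -
      have "x - x1 \<in> T" using that by (auto simp: T_def)
      then show ?thesis using g(2)[of "x - x1"] g(1) by (simp add: linear_diff)
    qed
    then obtain \<beta> where \<beta>: "\<forall>x\<in>X. g x = g x1 + \<beta> * (L x - 1)"
      using eqns[OF g(1)] by blast
    have "g x2 = g x1"
      using g(2)[of d] g(1) by (simp add: d_def linear_diff)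
    then have "\<beta> = 0"
      using \<beta> x2 by simp
    then show False
      using \<beta> z g(1,3) by (simp add: linear_diff)
  qed
  have "(\<lambda>x. x - x1) ` X \<subseteq> span (insert d T)"
    using vertex_span by blast
  then have "(\<lambda>x. x - x1) ` ?C \<subseteq> span (insert d T)"
    using convex_hull_translation_in_span span_minimal[OF _ subspace_span] by blast
  moreover have "x1 \<in> ?C" "x2 \<in> ?C"
    using x1 x2 by (auto intro: hull_inc)
  moreover have "T \<subseteq> (\<lambda>x. x - x1) ` ?F"
    by (auto simp: T_def intro: hull_inc)
  ultimately have "dim ((\<lambda>x. x - x1) ` ?C) = Suc (dim ((\<lambda>x. x - x1) ` ?F))"
    using X L x1(2) x2(2)
    by (intro dim_translation_level_subset[of L T x1 ?F ?C d]) (auto simp: T_def d_def linear_diff)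
  moreover have "?F face_of ?C"
    using convex_hull_linear_ge[OF L ge] by (intro face_of_linear_level[OF convex_convex_hull L])
  moreover have "x1 \<in> ?F"
    using x1 by (auto intro: hull_inc)
  ultimately show ?thesis
    by (simp add: is_facet_def adim_eq_dim_translation[of x1])
qed

section \<open>Paths, layers and the jump inequality\<close>

lemma incidence_Cons_Cons:
  "x \<notin> set (y # zs) \<Longrightarrow> incidence (x # y # zs) = indicator {(x, y)} + incidence (y # zs)"
  by (auto simp: incidence_def indicator_def fun_eq_iff dest: set_zip_leftD)

lemma linear_incidence:
  assumes "linear g" "distinct vs"
  shows "g (incidence vs) = adj_sum (\<lambda>a b. g (indicator {(a, b)})) vs"
  using assms(2)
proof (induction "\<lambda>a b. g (indicator {(a, b)})" vs rule: adj_sum.induct)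
  case (1 x y zs)
  then show ?case
    by (simp add: incidence_Cons_Cons linear_add[OF assms(1)])
qed (simp_all add: incidence_def zero_fun_def[symmetric] linear_0[OF assms(1)])

lemma finite_arcs: "finite (arcs n)"
  by (rule finite_subset[of _ "{0..n} \<times> {0..n}"]) (auto simp: arcs_def)

lemma arc_ends_le: "(u, v) \<in> arcs n \<Longrightarrow> u \<le> n \<and> v \<le> n"
  by (simp add: arcs_def)

lemma xsum_arcs_filter: "xsum x {e \<in> arcs n. P e} = (\<Sum>e\<in>arcs n. (if P e then 1 else 0) * x e)"
  unfolding xsum_def using finite_arcs by (auto simp: sum.inter_filter intro!: sum.cong)

lemma path_arc: "is_pPath n p vs \<Longrightarrow> k < p \<Longrightarrow> (vs ! k, vs ! Suc k) \<in> arcs n"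
  by (simp add: is_pPath_def)

lemma path_vertex_le:
  assumes "is_pPath n p vs" "k \<le> p"
  shows "vs ! k \<le> n"
proof (cases "k < p")
  case True
  then show ?thesis using path_arc[OF assms(1)] arc_ends_le by blast
next
  case False
  have len: "length vs = p + 1" and "last vs = n"
    using assms(1) by (simp_all add: is_pPath_def)
  moreover have "vs \<noteq> []" and "k = p"
    using len False assms(2) by auto
  ultimately show ?thesis by (simp add: last_conv_nth)
qed

lemma finite_pPaths: "finite {vs. is_pPath n p vs}"
proof (rule finite_subset)
  have "length vs = p + 1 \<and> set vs \<subseteq> {0..n}" if P: "is_pPath n p vs" for vs
  proof
    show len: "length vs = p + 1" using P by (simp add: is_pPath_def)
    show "set vs \<subseteq> {0..n}"
      using path_vertex_le[OF P] len by (auto simp: in_set_conv_nth)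
  qed
  then show "{vs. is_pPath n p vs} \<subseteq> {vs. set vs \<subseteq> {0..n} \<and> length vs = p + 1}"
    by blast
  show "finite {vs. set vs \<subseteq> {0..n} \<and> length vs = p + 1}"
    by (rule finite_lists_length_eq) simp
qed

locale jump_partition =
  fixes n p :: nat and S :: "nat \<Rightarrow> nat set"
  assumes p_ge_4: "4 \<le> p"
    and S_subset: "\<And>i. i \<le> p + 1 \<Longrightarrow> S i \<subseteq> {0..n}"
    and S_Union: "(\<Union>i\<in>{0..p+1}. S i) = {0..n}"
    and S_disjoint: "\<And>i j. i \<le> p + 1 \<Longrightarrow> j \<le> p + 1 \<Longrightarrow> i \<noteq> j \<Longrightarrow> S i \<inter> S j = {}"
    and S_0: "S 0 = {0}" and S_last: "S (p + 1) = {n}"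
    and card_S: "\<And>i. 1 \<le> i \<Longrightarrow> i \<le> p \<Longrightarrow> 2 \<le> card (S i)"
begin

definition layer :: "nat \<Rightarrow> nat" where
  "layer v = (THE i. i \<le> p + 1 \<and> v \<in> S i)"

lemma layer_eq: "v \<in> S i \<Longrightarrow> i \<le> p + 1 \<Longrightarrow> layer v = i"
  unfolding layer_def by (rule the_equality) (use S_disjoint in blast)+

lemma layer_mem: "v \<le> n \<Longrightarrow> v \<in> S (layer v) \<and> layer v \<le> p + 1"
proof -
  assume "v \<le> n"
  then obtain i where "i \<le> p + 1" "v \<in> S i"
    using S_Union by (metis UN_iff atLeastAtMost_iff le0)
  then show ?thesis using layer_eq by simp
qed

lemma mem_S_le: "v \<in> S i \<Longrightarrow> i \<le> p + 1 \<Longrightarrow> v \<le> n"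
  using S_subset[of i] by auto

lemma mem_S_iff: "v \<le> n \<Longrightarrow> i \<le> p + 1 \<Longrightarrow> v \<in> S i \<longleftrightarrow> layer v = i"
  using layer_eq layer_mem by metis

lemma layer_0 [simp]: "layer 0 = 0"
  using layer_eq[of 0 0] S_0 by simp

lemma layer_n [simp]: "layer n = p + 1"
  using layer_eq[of n "p + 1"] S_last by simp

lemma layer_eq_0_iff: "v \<le> n \<Longrightarrow> layer v = 0 \<longleftrightarrow> v = 0"
  using mem_S_iff[of v 0] S_0 by auto

lemma layer_eq_last_iff: "v \<le> n \<Longrightarrow> layer v = p + 1 \<longleftrightarrow> v = n"
  using mem_S_iff[of v "p + 1"] S_last by auto

definition jump_coeff :: "nat \<Rightarrow> nat \<Rightarrow> real" where
  "jump_coeff i j = (if i < p \<and> i + 2 \<le> j then 1 else 0)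
     - (if (i = p - 1 \<or> i = p) \<and> (j = 1 \<or> j = 2) then 1 else 0)"

lemma jump_coeff_forward [simp]: "jump_coeff i (Suc i) = 0"
  using p_ge_4 unfolding jump_coeff_def by auto

lemma arcs_between_S:
  "i \<le> p + 1 \<Longrightarrow> j \<le> p + 1 \<Longrightarrow>
    arcs_between n (S i) (S j) = {e \<in> arcs n. layer (fst e) = i \<and> layer (snd e) = j}"
  unfolding arcs_between_def using layer_eq layer_mem arc_ends_le by fastforce

lemma jump_lhs_forward_part:
  "(\<Sum>i<p. \<Sum>j\<in>{i+2..p+1}. xsum x (arcs_between n (S i) (S j)))
   = (\<Sum>e\<in>arcs n. (if layer (fst e) < p \<and> layer (fst e) + 2 \<le> layer (snd e) then 1 else 0) * x e)"
proof -
  have "(\<Sum>i<p. \<Sum>j\<in>{i+2..p+1}. xsum x (arcs_between n (S i) (S j)))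
      = (\<Sum>i<p. \<Sum>j\<in>{i+2..p+1}. \<Sum>e\<in>arcs n. (if layer (fst e) = i \<and> layer (snd e) = j then 1 else 0) * x e)"
    by (intro sum.cong refl) (simp add: arcs_between_S xsum_arcs_filter)
  also have "\<dots> = (\<Sum>e\<in>arcs n. \<Sum>i<p. \<Sum>j\<in>{i+2..p+1}. (if layer (fst e) = i \<and> layer (snd e) = j then 1 else 0) * x e)"
    by (simp add: sum.swap[of _ "arcs n"] sum.swap[of _ "{_..p+1}"])
  also have "\<dots> = (\<Sum>e\<in>arcs n. (if layer (fst e) < p \<and> layer (fst e) + 2 \<le> layer (snd e) then 1 else 0) * x e)"
  proof (intro sum.cong refl)
    fix e assume e: "e \<in> arcs n"
    have ls: "layer (snd e) \<le> p + 1" using layer_mem arc_ends_le e by (metis prod.collapse)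
    have "(\<Sum>i<p. \<Sum>j\<in>{i+2..p+1}. (if layer (fst e) = i \<and> layer (snd e) = j then 1 else 0) * x e)
        = (\<Sum>i<p. if layer (fst e) = i \<and> i + 2 \<le> layer (snd e) then x e else 0)"
    proof (intro sum.cong refl)
      fix i
      have "(\<Sum>j\<in>{i+2..p+1}. (if layer (fst e) = i \<and> layer (snd e) = j then 1 else 0) * x e)
         = (\<Sum>j\<in>{i+2..p+1}. if layer (snd e) = j then (if layer (fst e) = i then x e else 0) else 0)"
        by (intro sum.cong refl) auto
      also have "\<dots> = (if layer (fst e) = i \<and> i + 2 \<le> layer (snd e) then x e else 0)"
        using ls by (simp add: sum.delta)
      finally show "(\<Sum>j\<in>{i+2..p+1}. (if layer (fst e) = i \<and> layer (snd e) = j then 1 else 0) * x e)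
         = (if layer (fst e) = i \<and> i + 2 \<le> layer (snd e) then x e else 0)" .
    qed
    also have "\<dots> = (if layer (fst e) < p \<and> layer (fst e) + 2 \<le> layer (snd e) then 1 else 0) * x e"
    proof -
      have "(\<Sum>i<p. if layer (fst e) = i \<and> i + 2 \<le> layer (snd e) then x e else 0)
          = (\<Sum>i<p. if layer (fst e) = i then (if layer (fst e) + 2 \<le> layer (snd e) then x e else 0) else 0)"
        by (intro sum.cong refl) auto
      also have "\<dots> = (if layer (fst e) < p \<and> layer (fst e) + 2 \<le> layer (snd e) then 1 else 0) * x e"
        by (simp add: sum.delta)
      finally show ?thesis .
    qed
    finally show "(\<Sum>i<p. \<Sum>j\<in>{i+2..p+1}. (if layer (fst e) = i \<and> layer (snd e) = j then 1 else 0) * x e)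
        = (if layer (fst e) < p \<and> layer (fst e) + 2 \<le> layer (snd e) then 1 else 0) * x e" .
  qed
  finally show ?thesis .
qed

lemma jump_lhs_backward_part:
  "xsum x (arcs_between n (S (p - 1) \<union> S p) (S 1 \<union> S 2))
   = (\<Sum>e\<in>arcs n. (if (layer (fst e) = p - 1 \<or> layer (fst e) = p) \<and> (layer (snd e) = 1 \<or> layer (snd e) = 2) then 1 else 0) * x e)"
proof -
  have "arcs_between n (S (p - 1) \<union> S p) (S 1 \<union> S 2)
     = {e \<in> arcs n. (layer (fst e) = p - 1 \<or> layer (fst e) = p) \<and> (layer (snd e) = 1 \<or> layer (snd e) = 2)}"
  proof -
    have p1: "p - 1 \<le> p + 1" "p \<le> p + 1" "1 \<le> p + 1" "2 \<le> p + 1"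
      using p_ge_4 by auto
    show ?thesis unfolding arcs_between_def
    proof (rule Collect_cong)
      fix e :: "nat \<times> nat"
      show "(case e of (i, j) \<Rightarrow> (i, j) \<in> arcs n \<and> i \<in> S (p - 1) \<union> S p \<and> j \<in> S 1 \<union> S 2) =
        (e \<in> arcs n \<and> (layer (fst e) = p - 1 \<or> layer (fst e) = p) \<and> (layer (snd e) = 1 \<or> layer (snd e) = 2))"
      proof (cases "e \<in> arcs n")
        case True
        then have le: "fst e \<le> n" "snd e \<le> n" using arc_ends_le by (metis prod.collapse)+
        show ?thesis
          using True mem_S_iff[OF le(1) p1(1)] mem_S_iff[OF le(1) p1(2)] mem_S_iff[OF le(2) p1(3)] mem_S_iff[OF le(2) p1(4)]
          by (cases e) simp
      next
        case False then show ?thesis by (cases e) simp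
      qed
    qed
  qed
  then show ?thesis by (simp add: xsum_arcs_filter)
qed

lemma jump_lhs_eq_sum:
  "jump_lhs n p S x = (\<Sum>e\<in>arcs n. jump_coeff (layer (fst e)) (layer (snd e)) * x e)"
  unfolding jump_lhs_def jump_lhs_forward_part jump_lhs_backward_part jump_coeff_def
  by (simp add: sum_subtractf[symmetric] left_diff_distrib)

lemma linear_jump_lhs: "linear (jump_lhs n p S)"
  by (rule linearI) (simp_all add: jump_lhs_eq_sum scaleR_fun_def sum.distrib algebra_simps sum_distrib_left)

lemma jump_lhs_indicator:
  "(u, v) \<in> arcs n \<Longrightarrow> jump_lhs n p S (indicator {(u, v)}) = jump_coeff (layer u) (layer v)"
  unfolding jump_lhs_eq_sum indicator_def using finite_arcs
  by (simp add: of_bool_def if_distrib sum.delta cong: if_cong)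

definition jump_count :: "nat list \<Rightarrow> real" where
  "jump_count vs = adj_sum (\<lambda>u v. jump_coeff (layer u) (layer v)) vs"

lemma jump_lhs_incidence:
  assumes P: "is_pPath n p vs"
  shows "jump_lhs n p S (incidence vs) = jump_count vs"
proof -
  have "jump_lhs n p S (incidence vs) = adj_sum (\<lambda>u v. jump_lhs n p S (indicator {(u, v)})) vs"
    using P by (simp add: linear_incidence[OF linear_jump_lhs] is_pPath_def)
  also have "\<dots> = jump_count vs"
    unfolding jump_count_def
  proof (rule adj_sum_cong)
    fix k assume "Suc k < length vs"
    then have "k < p" using P by (simp add: is_pPath_def)
    then show "jump_lhs n p S (indicator {(vs ! k, vs ! Suc k)}) = jump_coeff (layer (vs ! k)) (layer (vs ! Suc k))"
      using jump_lhs_indicator path_arc[OF P] by simp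
  qed
  finally show ?thesis .
qed

lemma jump_coeff_sum_ge_1:
  fixes L :: "nat \<Rightarrow> nat"
  assumes L0: "L 0 = 0" and Lp: "L p = p + 1"
    and Lmid: "\<And>k. 1 \<le> k \<Longrightarrow> k < p \<Longrightarrow> 1 \<le> L k \<and> L k \<le> p"
  shows "1 \<le> (\<Sum>k<p. jump_coeff (L k) (L (Suc k)))"
proof -
  have step: "(if t > m then 1 else 0) + jump_coeff t t' \<ge> (if t' > m + 1 then (1::real) else 0)"
    if "m + 1 \<le> p - 1" "1 \<le> t'" "t' \<le> p" "(m = 0 \<and> t = 0) \<or> (1 \<le> t \<and> t \<le> p \<and> 1 \<le> m)"
    for m t t'
    using that p_ge_4 unfolding jump_coeff_def by (auto split: if_splits)
  \<comment> \<open>a path that is ahead of schedule after \<open>m\<close> arcs has already collected a jump\<close>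
  have ahead: "(\<Sum>k<m. jump_coeff (L k) (L (Suc k))) \<ge> (if L m > m then 1 else 0)"
    if "m \<le> p - 1" for m
    using that
  proof (induction m)
    case 0
    then show ?case using L0 by simp
  next
    case (Suc m)
    have "(m = 0 \<and> L m = 0) \<or> (1 \<le> L m \<and> L m \<le> p \<and> 1 \<le> m)"
      using Lmid[of m] L0 Suc.prems p_ge_4 by (cases "m = 0") auto
    then have "(if L m > m then 1 else 0) + jump_coeff (L m) (L (Suc m))
        \<ge> (if L (Suc m) > Suc m then (1::real) else 0)"
      using step[of m "L (Suc m)" "L m"] Lmid[of "Suc m"] Suc.prems p_ge_4 by simp
    moreover have "(\<Sum>k<m. jump_coeff (L k) (L (Suc k))) \<ge> (if L m > m then 1 else 0)"
      using Suc by simp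
    ultimately show ?case by (simp only: sum.lessThan_Suc)
  qed
  have "(\<Sum>k<p. jump_coeff (L k) (L (Suc k)))
      = (\<Sum>k<p - 1. jump_coeff (L k) (L (Suc k))) + jump_coeff (L (p - 1)) (L p)"
    using sum.lessThan_Suc[of "\<lambda>k. jump_coeff (L k) (L (Suc k))" "p - 1"] p_ge_4
    by (simp add: Suc_diff_Suc numeral_eq_Suc)
  moreover have "(if L (p - 1) > p - 1 then 1 else 0) + jump_coeff (L (p - 1)) (L p) \<ge> (1::real)"
    using Lmid[of "p - 1"] Lp p_ge_4 unfolding jump_coeff_def by (auto split: if_splits)
  ultimately show ?thesis
    using ahead[of "p - 1"] by linarith
qed

lemma jump_count_ge_1:
  assumes P: "is_pPath n p vs"
  shows "1 \<le> jump_count vs"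
proof -
  have len: "length vs = p + 1" and dist: "distinct vs"
    using P by (simp_all add: is_pPath_def)
  have ne: "vs \<noteq> []" using len by auto
  have v0: "vs ! 0 = 0" and vp: "vs ! p = n"
    using P len by (simp_all add: is_pPath_def hd_conv_nth[OF ne, symmetric] last_conv_nth[OF ne])
  have "1 \<le> (\<Sum>k<p. jump_coeff (layer (vs ! k)) (layer (vs ! Suc k)))"
  proof (rule jump_coeff_sum_ge_1)
    fix k assume k: "1 \<le> k" "k < p"
    have le: "vs ! k \<le> n"
      using path_vertex_le[OF P] k by simp
    have "vs ! k \<noteq> vs ! 0" "vs ! k \<noteq> vs ! p"
      using k len by (simp_all add: nth_eq_iff_index_eq[OF dist])
    then have "layer (vs ! k) \<noteq> 0" "layer (vs ! k) \<noteq> p + 1"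
      using v0 vp layer_eq_0_iff[OF le] layer_eq_last_iff[OF le] by simp_all
    then show "1 \<le> layer (vs ! k) \<and> layer (vs ! k) \<le> p"
      using layer_mem[OF le] by linarith
  qed (use v0 vp in simp_all)
  then show ?thesis
    using len by (simp add: jump_count_def adj_sum_conv_sum_nth)
qed

text \<open>Paths are built from templates: a template lists the layers visited by a path,
  each paired with a flag that selects one of two fixed distinct vertices \<open>r t\<close>, \<open>s t\<close>
  of layer \<open>t\<close>.\<close>

definition pick :: "(nat \<Rightarrow> nat) \<Rightarrow> (nat \<Rightarrow> nat) \<Rightarrow> nat \<times> bool \<Rightarrow> nat" where
  "pick r s e = (if snd e then s (fst e) else r (fst e))"

lemma pick_simps [simp]: "pick r s (t, False) = r t" "pick r s (t, True) = s t"
  by (simp_all add: pick_def)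

definition is_selection :: "(nat \<Rightarrow> nat) \<Rightarrow> (nat \<Rightarrow> nat) \<Rightarrow> bool" where
  "is_selection r s \<longleftrightarrow> (\<forall>t\<le>p+1. r t \<in> S t) \<and> (\<forall>t. 1 \<le> t \<and> t \<le> p \<longrightarrow> s t \<in> S t \<and> s t \<noteq> r t)"

definition is_template :: "(nat \<times> bool) list \<Rightarrow> bool" where
  "is_template ws \<longleftrightarrow> length ws = p + 1 \<and> hd ws = (0, False) \<and> last ws = (p + 1, False)
     \<and> distinct ws \<and> (\<forall>e\<in>set ws. fst e \<le> p + 1 \<and> (snd e \<longrightarrow> 1 \<le> fst e \<and> fst e \<le> p))"

definition layer_jump :: "nat \<times> bool \<Rightarrow> nat \<times> bool \<Rightarrow> real" where
  "layer_jump e f = jump_coeff (fst e) (fst f)"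

lemma selection_mem: "is_selection r s \<Longrightarrow> t \<le> p + 1 \<Longrightarrow> r t \<in> S t"
  by (simp add: is_selection_def)

lemma selection_mem': "is_selection r s \<Longrightarrow> 1 \<le> t \<Longrightarrow> t \<le> p \<Longrightarrow> s t \<in> S t \<and> s t \<noteq> r t"
  by (simp add: is_selection_def)

lemma pick_mem:
  "is_selection r s \<Longrightarrow> fst e \<le> p + 1 \<Longrightarrow> (snd e \<longrightarrow> 1 \<le> fst e \<and> fst e \<le> p)
    \<Longrightarrow> pick r s e \<in> S (fst e)"
  unfolding is_selection_def pick_def by auto

lemma inj_on_pick:
  assumes sel: "is_selection r s" and W: "is_template ws"
  shows "inj_on (pick r s) (set ws)"
proof (rule inj_onI)
  fix e f assume e: "e \<in> set ws" and f: "f \<in> set ws" and eq: "pick r s e = pick r s f"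
  have "pick r s e \<in> S (fst e)" "pick r s f \<in> S (fst f)" "fst e \<le> p + 1" "fst f \<le> p + 1"
    using W e f pick_mem[OF sel] by (auto simp: is_template_def)
  then have "fst e = fst f"
    using eq layer_eq by metis
  moreover have "snd e = snd f"
    using eq \<open>fst e = fst f\<close> selection_mem'[OF sel, of "fst e"] W e f
    by (auto simp: is_template_def pick_def split: if_splits)
  ultimately show "e = f" by (simp add: prod_eq_iff)
qed

lemma template_path:
  assumes sel: "is_selection r s" and W: "is_template ws"
  shows "is_pPath n p (map (pick r s) ws)"
proof -
  let ?vs = "map (pick r s) ws"
  have len: "length ?vs = p + 1" and ne: "ws \<noteq> []"
    using W by (auto simp: is_template_def)
  have dist: "distinct ?vs"
    using inj_on_pick[OF sel W] W by (simp add: distinct_map is_template_def)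
  have r0: "r 0 = 0" and rn: "r (p + 1) = n"
    using selection_mem[OF sel, of 0] selection_mem[OF sel, of "p + 1"] S_0 S_last by auto
  have hd0: "hd ?vs = 0" and lastn: "last ?vs = n"
    using W ne r0 rn by (simp_all add: is_template_def hd_map last_map)
  have le: "?vs ! k \<le> n" if "k < p + 1" for k
  proof -
    have "ws ! k \<in> set ws" using that W by (simp add: is_template_def)
    then have "pick r s (ws ! k) \<in> S (fst (ws ! k)) \<and> fst (ws ! k) \<le> p + 1"
      using pick_mem[OF sel] W by (auto simp: is_template_def)
    then show ?thesis using mem_S_le that W by (simp add: is_template_def)
  qed
  have v0: "?vs ! 0 = 0" and vp: "?vs ! p = n"
    using hd0 lastn len ne by (simp_all add: hd_conv_nth[symmetric] last_conv_nth)
  have "(?vs ! k, ?vs ! Suc k) \<in> arcs n" if k: "k < p" for k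
  proof -
    have ix: "i < length ?vs \<Longrightarrow> j < length ?vs \<Longrightarrow> ?vs ! i = ?vs ! j \<longleftrightarrow> i = j" for i j
      by (rule nth_eq_iff_index_eq[OF dist])
    have "?vs ! k \<noteq> ?vs ! Suc k" "?vs ! Suc k \<noteq> 0" "?vs ! k \<noteq> n"
      using ix[of k "Suc k"] ix[of "Suc k" 0] ix[of k p] len k v0 vp ne by auto
    moreover have "\<not> (?vs ! k = 0 \<and> ?vs ! Suc k = n)"
      using ix[of k 0] ix[of "Suc k" p] len k v0 vp ne p_ge_4 by auto
    ultimately show ?thesis
      using le[of k] le[of "Suc k"] k unfolding arcs_def by simp
  qed
  then show ?thesis
    using len dist hd0 lastn by (simp add: is_pPath_def)
qed

lemma template_jump_count:
  assumes sel: "is_selection r s" and W: "is_template ws"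
  shows "jump_count (map (pick r s) ws) = adj_sum layer_jump ws"
  unfolding jump_count_def adj_sum_map
proof (rule adj_sum_cong)
  have "layer (pick r s e) = fst e" if "e \<in> set ws" for e
    using pick_mem[OF sel] W that layer_eq by (auto simp: is_template_def)
  then show "jump_coeff (layer (pick r s (ws ! k))) (layer (pick r s (ws ! Suc k)))
      = layer_jump (ws ! k) (ws ! Suc k)" if "Suc k < length ws" for k
    using that by (simp add: layer_jump_def)
qed

definition layer_run :: "nat \<Rightarrow> nat \<Rightarrow> (nat \<times> bool) list" where
  "layer_run a b = map (\<lambda>t. (t, False)) [a..<b]"

lemma layer_run_simps [simp]:
  "a < b \<Longrightarrow> layer_run a b \<noteq> []"
  "a < b \<Longrightarrow> hd (layer_run a b) = (a, False)"
  "a < b \<Longrightarrow> last (layer_run a b) = (b - 1, False)"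
  "length (layer_run a b) = b - a"
  "distinct (layer_run a b)"
  by (simp_all add: layer_run_def hd_map hd_upt last_map distinct_map inj_on_def)

lemma mem_layer_run: "e \<in> set (layer_run a b) \<longleftrightarrow> \<not> snd e \<and> a \<le> fst e \<and> fst e < b"
  by (cases e) (auto simp: layer_run_def)

lemma adj_sum_layer_run:
  "adj_sum f (layer_run a b) = (\<Sum>t = a..<b - 1. f (t, False) (Suc t, False))"
  unfolding layer_run_def by (rule adj_sum_upt)

lemma layer_run_empty: "b \<le> a \<Longrightarrow> layer_run a b = []"
  by (simp add: layer_run_def)

lemma layer_jump_layer_run [simp]: "adj_sum layer_jump (layer_run a b) = 0"
  by (simp add: layer_jump_def adj_sum_layer_run)

definition rep :: "nat \<Rightarrow> nat" where
  "rep t = (SOME v. v \<in> S t)"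

definition alt :: "nat \<Rightarrow> nat" where
  "alt t = (SOME v. v \<in> S t \<and> v \<noteq> rep t)"

definition other :: "nat \<Rightarrow> nat \<Rightarrow> nat" where
  "other t v = (if v = rep t then alt t else rep t)"

lemma S_nonempty: "t \<le> p + 1 \<Longrightarrow> S t \<noteq> {}"
  using card_S[of t] S_0 S_last by (cases "t = 0 \<or> t = p + 1") auto

lemma rep_mem: "t \<le> p + 1 \<Longrightarrow> rep t \<in> S t"
  unfolding rep_def using S_nonempty by (simp add: some_in_eq)

lemma rep_0 [simp]: "rep 0 = 0" and rep_last [simp]: "rep (Suc p) = n"
  using rep_mem[of 0] rep_mem[of "p + 1"] S_0 S_last by auto

lemma alt_mem: "1 \<le> t \<Longrightarrow> t \<le> p \<Longrightarrow> alt t \<in> S t \<and> alt t \<noteq> rep t"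
proof -
  assume t: "1 \<le> t" "t \<le> p"
  have "\<not> S t \<subseteq> {rep t}"
    using card_S[OF t] card_mono[of "{rep t}" "S t"] by auto
  then have "\<exists>v. v \<in> S t \<and> v \<noteq> rep t" by blast
  then show ?thesis unfolding alt_def by (rule someI_ex)
qed

lemma other_mem: "1 \<le> t \<Longrightarrow> t \<le> p \<Longrightarrow> v \<in> S t \<Longrightarrow> other t v \<in> S t \<and> other t v \<noteq> v"
  unfolding other_def using alt_mem rep_mem by auto

lemma selection_rep_alt: "is_selection rep alt"
  unfolding is_selection_def using rep_mem alt_mem by simp

lemma template_skip_1: "is_template ((0, False) # layer_run 2 (p + 2))"
  unfolding is_template_def using p_ge_4 by (auto simp: mem_layer_run)

lemma layer_jump_skip_1: "adj_sum layer_jump ((0, False) # layer_run 2 (p + 2)) = 1"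
  using p_ge_4 by (simp add: adj_sum_Cons layer_jump_def jump_coeff_def)

lemma exists_tight_path: "\<exists>vs. is_pPath n p vs \<and> jump_count vs = 1"
  using template_path[OF selection_rep_alt template_skip_1]
    template_jump_count[OF selection_rep_alt template_skip_1] layer_jump_skip_1
  by (intro exI[of _ "map (pick rep alt) ((0, False) # layer_run 2 (p + 2))"]) simp

lemma exists_path_jump_count_2: "\<exists>vs. is_pPath n p vs \<and> jump_count vs = 2"
proof -
  define ws where "ws = [(0, False), (1, False), (1, True), (3, False)] @ layer_run 5 (p + 2)"
  have W: "is_template ws"
    unfolding is_template_def ws_def using p_ge_4 by (auto simp: mem_layer_run)
  have "p - 1 \<noteq> 1"
    using p_ge_4 by auto
  then have "adj_sum layer_jump ws = 2"
    unfolding ws_def using p_ge_4 by (simp add: adj_sum_append adj_sum_Cons layer_jump_def jump_coeff_def)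
  then show ?thesis
    using template_path[OF selection_rep_alt W] template_jump_count[OF selection_rep_alt W]
    by (intro exI[of _ "map (pick rep alt) ws"]) simp
qed

lemma selection_rep_update:
  assumes "t \<le> p + 1" "x \<in> S t"
  shows "is_selection (rep(t := x)) (alt(t := other t x))"
  unfolding is_selection_def using assms rep_mem alt_mem other_mem[of t x] by auto

lemma selection_rep_update2:
  assumes "a \<le> p + 1" "x \<in> S a" "b \<le> p + 1" "y \<in> S b" "a \<noteq> b"
  shows "is_selection (rep(a := x, b := y)) (alt(a := other a x, b := other b y))"
  unfolding is_selection_def using assms rep_mem alt_mem other_mem[of a x] other_mem[of b y] by auto

end

section \<open>Weights that are constant on tight paths\<close>

text \<open>Subtracting \<open>pot v - pot u + alpha + beta * jump_coeff (layer u) (layer v)\<close> from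
  \<open>w (u, v)\<close> changes the weight of every \<open>p\<close>-path by a constant plus \<open>beta * jump_count\<close>.
  The potential and the constants are chosen so that the reduced weight \<open>rw\<close> vanishes on the
  arcs from \<open>rep t\<close> into layer \<open>t + 1\<close>, on \<open>(0, rep 2)\<close> and on \<open>(rep 1, alt 1)\<close>.\<close>

locale tight_weight = jump_partition +
  fixes w :: "nat \<times> nat \<Rightarrow> real" and K :: real
  assumes tight: "\<And>vs. is_pPath n p vs \<Longrightarrow> jump_count vs = 1 \<Longrightarrow> adj_sum (\<lambda>u v. w (u, v)) vs = K"
begin

definition alpha :: real where
  "alpha = w (rep 1, alt 1) - w (0, alt 1) + w (0, rep 1)"

primrec rep_pot :: "nat \<Rightarrow> real" where
  "rep_pot 0 = 0"
| "rep_pot (Suc t) = rep_pot t + w (rep t, rep (Suc t)) - alpha"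

definition pot :: "nat \<Rightarrow> real" where
  "pot v = (if layer v = 0 then 0 else rep_pot (layer v - 1) + w (rep (layer v - 1), v) - alpha)"

definition beta :: real where
  "beta = w (0, rep 2) - pot (rep 2) - alpha"

definition rw :: "nat \<Rightarrow> nat \<Rightarrow> real" where
  "rw u v = w (u, v) - pot v + pot u - alpha - beta * jump_coeff (layer u) (layer v)"

lemma pot_0 [simp]: "pot 0 = 0"
  by (simp add: pot_def)

lemma pot_rep: "t \<le> p + 1 \<Longrightarrow> pot (rep t) = rep_pot t"
  using layer_eq[OF rep_mem] by (cases t) (simp_all add: pot_def)

lemma rw_rep_next: "t \<le> p \<Longrightarrow> v \<in> S (Suc t) \<Longrightarrow> rw (rep t) v = 0"
proof -
  assume t: "t \<le> p" and v: "v \<in> S (Suc t)"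
  have lv: "layer v = Suc t" using layer_eq[OF v] t by simp
  have lr: "layer (rep t) = t" using layer_eq[OF rep_mem] t by simp
  have "pot v = rep_pot t + w (rep t, v) - alpha" using lv by (simp add: pot_def)
  moreover have "pot (rep t) = rep_pot t" using pot_rep t by simp
  ultimately show ?thesis unfolding rw_def using lv lr by simp
qed

lemma rw_0_rep_2: "rw 0 (rep 2) = 0"
proof -
  have "jump_coeff 0 2 = 1" using p_ge_4 unfolding jump_coeff_def by simp
  moreover have "layer (rep 2) = 2" using layer_eq[OF rep_mem] p_ge_4 by simp
  ultimately show ?thesis unfolding rw_def beta_def by simp
qed

lemma rw_rep_alt_1: "rw (rep 1) (alt 1) = 0"
proof -
  have la: "layer (alt 1) = 1" using layer_eq alt_mem p_ge_4 by simp
  have lr: "layer (rep 1) = 1" using layer_eq[OF rep_mem] p_ge_4 by simp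
  have "jump_coeff 1 1 = 0" using p_ge_4 unfolding jump_coeff_def by simp
  moreover have "pot (alt 1) = w (0, alt 1) - alpha" using la by (simp add: pot_def)
  moreover have "pot (rep 1) = w (0, rep 1) - alpha" using pot_rep[of 1] by simp
  ultimately show ?thesis unfolding rw_def alpha_def using la lr by simp
qed

lemma path_weight_split:
  assumes P: "is_pPath n p vs"
  shows "adj_sum (\<lambda>u v. w (u, v)) vs = adj_sum rw vs + pot n + alpha * p + beta * jump_count vs"
proof -
  have ne: "vs \<noteq> []" and len: "length vs = p + 1" and "hd vs = 0" "last vs = n"
    using P by (auto simp: is_pPath_def)
  have "adj_sum (\<lambda>u v. w (u, v)) vs
      = adj_sum (\<lambda>u v. (rw u v + (pot v - pot u)) + (alpha + beta * jump_coeff (layer u) (layer v))) vs"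
    by (intro adj_sum_cong) (simp add: rw_def)
  also have "\<dots> = adj_sum rw vs + adj_sum (\<lambda>u v. pot v - pot u) vs
      + (adj_sum (\<lambda>u v. alpha) vs + beta * adj_sum (\<lambda>u v. jump_coeff (layer u) (layer v)) vs)"
    by (simp add: adj_sum_add adj_sum_cmult)
  also have "\<dots> = adj_sum rw vs + pot n + alpha * p + beta * jump_count vs"
    using ne len \<open>hd vs = 0\<close> \<open>last vs = n\<close>
    by (simp add: adj_sum_telescope adj_sum_const jump_count_def)
  finally show ?thesis .
qed

definition rw_pick :: "(nat \<Rightarrow> nat) \<Rightarrow> (nat \<Rightarrow> nat) \<Rightarrow> nat \<times> bool \<Rightarrow> nat \<times> bool \<Rightarrow> real" where
  "rw_pick r s e f = rw (pick r s e) (pick r s f)"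

lemma tight_template_weight:
  assumes "is_selection r s" "is_template ws" "adj_sum layer_jump ws = 1"
  shows "adj_sum (rw_pick r s) ws + pot n + alpha * p + beta = K"
proof -
  have P: "is_pPath n p (map (pick r s) ws)"
    by (rule template_path[OF assms(1,2)])
  have J: "jump_count (map (pick r s) ws) = 1"
    using template_jump_count[OF assms(1,2)] assms(3) by simp
  have "adj_sum (rw_pick r s) ws = adj_sum rw (map (pick r s) ws)"
    by (simp add: adj_sum_map rw_pick_def[abs_def])
  then show ?thesis
    using tight[OF P J] path_weight_split[OF P] J by simp
qed

lemma adj_sum_rw_pick_layer_run:
  "adj_sum (rw_pick r s) (layer_run a b) = (\<Sum>t = a..<b - 1. rw (r t) (r (Suc t)))"
  by (simp add: adj_sum_layer_run rw_pick_def)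

lemma rw_pick_run_zero:
  assumes "\<And>u. a \<le> u \<Longrightarrow> u < b - 1 \<Longrightarrow> rw (r u) (r (Suc u)) = 0"
  shows "adj_sum (rw_pick r s) (layer_run a b) = 0"
  using assms by (simp add: adj_sum_rw_pick_layer_run)

lemma rw_pick_run_rep:
  assumes "\<And>u. a \<le> u \<Longrightarrow> u < b - 1 \<Longrightarrow> r u = rep u" "\<And>u. u \<le> p + 1 \<Longrightarrow> r u \<in> S u" "b \<le> p + 2"
  shows "adj_sum (rw_pick r s) (layer_run a b) = 0"
proof (rule rw_pick_run_zero)
  fix u assume u: "a \<le> u" "u < b - 1"
  then have "Suc u \<le> p + 1" using assms(3) by auto
  then show "rw (r u) (r (Suc u)) = 0" using rw_rep_next assms(1,2) u by simp
qed

lemma tight_constant: "pot n + alpha * p + beta = K"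
proof -
  have "adj_sum (rw_pick rep alt) (layer_run 2 (p + 2)) = 0"
    by (rule rw_pick_run_rep) (use rep_mem in auto)
  then have "adj_sum (rw_pick rep alt) ((0, False) # layer_run 2 (p + 2)) = 0"
    using p_ge_4 rw_0_rep_2 by (simp add: adj_sum_Cons rw_pick_def)
  then show ?thesis
    using tight_template_weight[OF selection_rep_alt template_skip_1 layer_jump_skip_1] by simp
qed

lemma rw_tight_template:
  assumes "is_selection r s" "is_template ws" "adj_sum layer_jump ws = 1"
  shows "adj_sum (rw_pick r s) ws = 0"
  using tight_template_weight[OF assms] tight_constant by simp

lemma rw_rep_skip:
  assumes t: "1 \<le> t" "t \<le> p"
  shows "rw (rep (t - 1)) (rep (Suc t)) = 0"
proof -
  define ws where "ws = layer_run 0 t @ layer_run (Suc t) (p + 2)"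
  have W: "is_template ws" unfolding is_template_def ws_def using t by (auto simp: mem_layer_run)
  have ne: "layer_run 0 t \<noteq> []" "layer_run (Suc t) (p + 2) \<noteq> []" using t by auto
  have D: "adj_sum layer_jump ws = 1"
    unfolding ws_def adj_sum_append[OF ne] using t p_ge_4 by (simp add: layer_jump_def jump_coeff_def; arith)
  have "adj_sum (rw_pick rep alt) ws = rw (rep (t - 1)) (rep (Suc t))"
    unfolding ws_def adj_sum_append[OF ne] using t
    by (simp add: rw_pick_run_rep rep_mem rw_pick_def)
  then show ?thesis using rw_tight_template[OF selection_rep_alt W D] by simp
qed

lemma rw_pick_run_single:
  assumes "a \<le> t" "t < b - 1" "\<And>u. a \<le> u \<Longrightarrow> u < b - 1 \<Longrightarrow> u \<noteq> t \<Longrightarrow> r u = rep u"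
    "\<And>u. u \<le> p + 1 \<Longrightarrow> r u \<in> S u" "b \<le> p + 2"
  shows "adj_sum (rw_pick r s) (layer_run a b) = rw (r t) (r (Suc t))"
proof -
  have "adj_sum (rw_pick r s) (layer_run a b) = (\<Sum>u\<in>{a..<b - 1}. rw (r u) (r (Suc u)))"
    by (simp add: adj_sum_rw_pick_layer_run)
  also have "\<dots> = (\<Sum>u\<in>{t}. rw (r u) (r (Suc u)))"
  proof (rule sum.mono_neutral_cong_right)
    show "{t} \<subseteq> {a..<b - 1}" using assms(1,2) by simp
    show "\<forall>u\<in>{a..<b - 1} - {t}. rw (r u) (r (Suc u)) = 0"
      using assms(3-5) rw_rep_next by auto
  qed simp_all
  finally show ?thesis by simp
qed

text \<open>From here on, \<open>rw\<close> is shown to vanish on an arc by exhibiting a tight template whose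
  reduced weight is that arc plus arcs already known to have reduced weight 0.\<close>

definition vanishes :: "nat \<Rightarrow> nat \<Rightarrow> bool" where
  "vanishes a b \<longleftrightarrow> (\<forall>x\<in>S a. \<forall>y\<in>S b. x \<noteq> y \<longrightarrow> rw x y = 0)"

lemma rw_to_next_rep:
  assumes t: "1 \<le> t" "t \<le> p" and v: "v \<in> S t"
  shows "rw v (rep (Suc t)) = 0"
proof -
  have tp: "t \<le> p + 1" using t by simp
  obtain s where sel: "is_selection (rep(t := v)) s" using selection_rep_update[OF tp v] by blast
  have mem: "\<And>u. u \<le> p + 1 \<Longrightarrow> (rep(t := v)) u \<in> S u"
    using selection_mem[OF sel] by blast
  show ?thesis
  proof (cases "3 \<le> t")
    case True
    define ws where "ws = [(0, False)] @ layer_run 2 (p + 2)"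
    have W: "is_template ws" unfolding is_template_def ws_def using t p_ge_4 by (auto simp: mem_layer_run)
    have ne: "[(0, False)] \<noteq> []" "layer_run 2 (p + 2) \<noteq> []" using p_ge_4 by auto
    have D: "adj_sum layer_jump ws = 1"
      unfolding ws_def adj_sum_append[OF ne] using p_ge_4 by (simp add: layer_jump_def jump_coeff_def)
    have "adj_sum (rw_pick (rep(t := v)) s) ws = rw 0 (rep 2) + rw v (rep (Suc t))"
      unfolding ws_def adj_sum_append[OF ne] using t True
      by (subst rw_pick_run_single[where t = t]) (auto simp: mem rw_pick_def v rep_mem)
    then show ?thesis using rw_tight_template[OF sel W D] rw_0_rep_2 by simp
  next
    case False
    define ws where "ws = layer_run 0 p @ [(p + 1, False)]"
    have W: "is_template ws" unfolding is_template_def ws_def using t p_ge_4 by (auto simp: mem_layer_run)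
    have ne: "layer_run 0 p \<noteq> []" "[(p + 1, False)] \<noteq> []" using p_ge_4 by auto
    have D: "adj_sum layer_jump ws = 1"
      unfolding ws_def adj_sum_append[OF ne] using p_ge_4 by (simp add: layer_jump_def jump_coeff_def)
    have "adj_sum (rw_pick (rep(t := v)) s) ws = rw v (rep (Suc t)) + rw (rep (p - 1)) (rep (Suc p))"
      unfolding ws_def adj_sum_append[OF ne] using t False p_ge_4
      by (subst rw_pick_run_single[where t = t]) (auto simp: mem rw_pick_def v rep_mem)
    then show ?thesis using rw_tight_template[OF sel W D] rw_rep_skip[of p] p_ge_4 by simp
  qed
qed

lemma rw_skip_from_rep:
  assumes t: "2 \<le> t" "t \<le> p" and v: "v \<in> S t"
  shows "rw (rep (t - 2)) v = 0"
proof -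
  have tp: "t \<le> p + 1" using t by simp
  obtain s where sel: "is_selection (rep(t := v)) s" using selection_rep_update[OF tp v] by blast
  have mem: "\<And>u. u \<le> p + 1 \<Longrightarrow> (rep(t := v)) u \<in> S u"
    using selection_mem[OF sel] by blast
  define ws where "ws = layer_run 0 (t - 1) @ layer_run t (p + 2)"
  have W: "is_template ws" unfolding is_template_def ws_def using t p_ge_4 by (auto simp: mem_layer_run)
  have ne: "layer_run 0 (t - 1) \<noteq> []" "layer_run t (p + 2) \<noteq> []" using t by auto
  have D: "adj_sum layer_jump ws = 1"
    unfolding ws_def adj_sum_append[OF ne] using t p_ge_4 by (simp add: layer_jump_def jump_coeff_def; arith)
  have "adj_sum (rw_pick (rep(t := v)) s) ws = rw (rep (t - 2)) v + rw v (rep (Suc t))"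
  proof -
    have "adj_sum (rw_pick (rep(t := v)) s) (layer_run 0 (t - 1)) = 0"
      using t by (intro rw_pick_run_rep) (auto simp: mem v rep_mem)
    moreover have "adj_sum (rw_pick (rep(t := v)) s) (layer_run t (p + 2)) = rw v (rep (Suc t))"
      using t by (subst rw_pick_run_single[where t = t]) (auto simp: mem v rep_mem)
    moreover have "t - 1 - 1 = t - 2" by simp
    moreover have "t - 2 \<noteq> t" using t by simp
    ultimately show ?thesis unfolding ws_def adj_sum_append[OF ne] using t by (simp add: rw_pick_def)
  qed
  then show ?thesis using rw_tight_template[OF sel W D] rw_to_next_rep[OF _ t(2) v] t by simp
qed

lemma rw_skip_to_rep:
  assumes t: "1 \<le> t" "t \<le> p - 1" and v: "v \<in> S t"
  shows "rw v (rep (t + 2)) = 0"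
proof -
  have tp: "t \<le> p + 1" using t by simp
  obtain s where sel: "is_selection (rep(t := v)) s" using selection_rep_update[OF tp v] by blast
  have mem: "\<And>u. u \<le> p + 1 \<Longrightarrow> (rep(t := v)) u \<in> S u"
    using selection_mem[OF sel] by blast
  define ws where "ws = layer_run 0 (t + 1) @ layer_run (t + 2) (p + 2)"
  have W: "is_template ws" unfolding is_template_def ws_def using t p_ge_4 by (auto simp: mem_layer_run)
  have ne: "layer_run 0 (t + 1) \<noteq> []" "layer_run (t + 2) (p + 2) \<noteq> []"
    using t p_ge_4 by auto
  have D: "adj_sum layer_jump ws = 1"
    unfolding ws_def adj_sum_append[OF ne] using t p_ge_4 by (simp add: layer_jump_def jump_coeff_def; arith)
  have "adj_sum (rw_pick (rep(t := v)) s) ws = rw v (rep (t + 2))"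
  proof -
    have "adj_sum (rw_pick (rep(t := v)) s) (layer_run 0 (t + 1)) = 0"
      using t by (intro rw_pick_run_rep) (auto simp: mem v rep_mem)
    moreover have "adj_sum (rw_pick (rep(t := v)) s) (layer_run (t + 2) (p + 2)) = 0"
      using t by (intro rw_pick_run_rep) (auto simp: mem v rep_mem)
    ultimately show ?thesis unfolding ws_def adj_sum_append[OF ne] using t by (simp add: rw_pick_def)
  qed
  then show ?thesis using rw_tight_template[OF sel W D] by simp
qed

lemma vanishes_next:
  assumes t: "t \<le> p"
  shows "vanishes t (Suc t)"
  unfolding vanishes_def
proof (intro ballI impI)
  fix x y assume x: "x \<in> S t" and y: "y \<in> S (Suc t)" and xy: "x \<noteq> y"
  let ?r = "rep(t := x, Suc t := y)"
  obtain s where sel: "is_selection ?r s"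
    using selection_rep_update2[of t x "Suc t" y] t x y by auto
  have mem: "\<And>u. u \<le> p + 1 \<Longrightarrow> ?r u \<in> S u"
    using selection_mem[OF sel] by blast
  show "rw x y = 0"
  proof (cases "2 \<le> t")
    case True
    define ws where "ws = layer_run 0 (t - 1) @ [(t, False)] @ layer_run (Suc t) (p + 2)"
    have W: "is_template ws" unfolding is_template_def ws_def using t True p_ge_4 by (auto simp: mem_layer_run)
    have ne: "layer_run 0 (t - 1) \<noteq> []" "[(t, False)] @ layer_run (Suc t) (p + 2) \<noteq> []"
      "[(t, False)] \<noteq> []" "layer_run (Suc t) (p + 2) \<noteq> []" using t True by auto
    have D: "adj_sum layer_jump ws = 1"
      unfolding ws_def adj_sum_append[OF ne(1,2)] adj_sum_append[OF ne(3,4)] using t True p_ge_4 by (simp add: layer_jump_def jump_coeff_def; arith)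
    have s1: "adj_sum (rw_pick ?r s) (layer_run 0 (t - 1)) = 0"
      using t True by (intro rw_pick_run_rep) (auto simp: mem x y rep_mem)
    have s2: "adj_sum (rw_pick ?r s) (layer_run (Suc t) (p + 2)) = 0"
    proof (rule rw_pick_run_zero)
      fix u assume u: "Suc t \<le> u" "u < p + 2 - 1"
      show "rw (?r u) (?r (Suc u)) = 0"
      proof (cases "u = Suc t")
        case True
        then show ?thesis using rw_to_next_rep[of "Suc t" y] y u by simp
      next
        case False
        then have "?r u = rep u" using u by simp
        then show ?thesis using rw_rep_next[of u "?r (Suc u)"] mem[of "Suc u"] u by simp
      qed
    qed
    have e: "t - 1 - 1 = t - 2" "t - 2 \<noteq> t" "t - 2 \<noteq> Suc t" using True by auto
    have "adj_sum (rw_pick ?r s) ws = rw (rep (t - 2)) x + rw x y"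
      unfolding ws_def adj_sum_append[OF ne(1,2)] adj_sum_append[OF ne(3,4)] using s1 s2 t True e
      by (simp add: rw_pick_def)
    then show ?thesis using rw_tight_template[OF sel W D] rw_skip_from_rep[OF True t x] by simp
  next
    case False
    define ws where "ws = layer_run 0 (t + 2) @ layer_run (t + 3) (p + 2)"
    have W: "is_template ws" unfolding is_template_def ws_def using t False p_ge_4 by (auto simp: mem_layer_run)
    have ne: "layer_run 0 (t + 2) \<noteq> []" "layer_run (t + 3) (p + 2) \<noteq> []"
      using t False p_ge_4 by auto
    have D: "adj_sum layer_jump ws = 1"
      unfolding ws_def adj_sum_append[OF ne] using t False p_ge_4 by (simp add: layer_jump_def jump_coeff_def; arith)
    have s1: "adj_sum (rw_pick ?r s) (layer_run 0 (t + 2)) = rw x y"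
      using t False by (subst rw_pick_run_single[where t = t]) (auto simp: mem x y rep_mem)
    have s2: "adj_sum (rw_pick ?r s) (layer_run (t + 3) (p + 2)) = 0"
      using t False by (intro rw_pick_run_rep) (auto simp: mem x y rep_mem)
    have "adj_sum (rw_pick ?r s) ws = rw x y + rw y (rep (t + 3))"
      unfolding ws_def adj_sum_append[OF ne] using s1 s2 t False p_ge_4
      by (simp add: rw_pick_def)
    moreover have "rw y (rep (t + 3)) = 0"
    proof -
      have e3: "Suc t + 2 = t + 3" by simp
      have "rw y (rep (Suc t + 2)) = 0" using rw_skip_to_rep[of "Suc t" y] y t False p_ge_4 by simp
      then show ?thesis unfolding e3 .
    qed
    ultimately show ?thesis using rw_tight_template[OF sel W D] by simp
  qed
qed

lemma vanishes_skip:
  assumes t: "t + 2 \<le> p + 1"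
  shows "vanishes t (t + 2)"
  unfolding vanishes_def
proof (intro ballI impI)
  fix x y assume x: "x \<in> S t" and y: "y \<in> S (t + 2)" and xy: "x \<noteq> y"
  have y': "y \<in> S (Suc (Suc t))" using y by simp
  let ?r = "rep(t := x, t + 2 := y)"
  obtain s where sel: "is_selection ?r s"
    using selection_rep_update2[of t x "t + 2" y] t x y by auto
  have mem: "\<And>u. u \<le> p + 1 \<Longrightarrow> ?r u \<in> S u"
    using selection_mem[OF sel] by blast
  define ws where "ws = layer_run 0 (t + 1) @ layer_run (t + 2) (p + 2)"
  have W: "is_template ws" unfolding is_template_def ws_def using t p_ge_4 by (auto simp: mem_layer_run)
  have ne: "layer_run 0 (t + 1) \<noteq> []" "layer_run (t + 2) (p + 2) \<noteq> []" using t by auto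
  have D: "adj_sum layer_jump ws = 1"
    unfolding ws_def adj_sum_append[OF ne] using t p_ge_4 by (simp add: layer_jump_def jump_coeff_def; arith)
  have s1: "adj_sum (rw_pick ?r s) (layer_run 0 (t + 1)) = 0"
    using t by (intro rw_pick_run_rep) (auto simp: mem x y y' rep_mem)
  have s2: "adj_sum (rw_pick ?r s) (layer_run (t + 2) (p + 2)) = 0"
  proof (rule rw_pick_run_zero)
    fix u assume u: "t + 2 \<le> u" "u < p + 2 - 1"
    show "rw (?r u) (?r (Suc u)) = 0"
    proof (cases "u = t + 2")
      case True
      then show ?thesis using rw_to_next_rep[of "t + 2" y] y u by simp
    next
      case False
      then have "?r u = rep u" using u by simp
      then show ?thesis using rw_rep_next[of u "?r (Suc u)"] mem[of "Suc u"] u by simp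
    qed
  qed
  have "adj_sum (rw_pick ?r s) ws = rw x y"
    unfolding ws_def adj_sum_append[OF ne] using s1 s2 t by (simp add: rw_pick_def)
  then show "rw x y = 0" using rw_tight_template[OF sel W D] by simp
qed

lemma vanishesD: "vanishes a b \<Longrightarrow> x \<in> S a \<Longrightarrow> y \<in> S b \<Longrightarrow> x \<noteq> y \<Longrightarrow> rw x y = 0"
  unfolding vanishes_def by blast

lemma vanishes_rw: "vanishes a b \<Longrightarrow> x \<in> S a \<Longrightarrow> y \<in> S b \<Longrightarrow> a \<noteq> b \<Longrightarrow> a \<le> p + 1 \<Longrightarrow> b \<le> p + 1 \<Longrightarrow> rw x y = 0"
  using vanishesD layer_eq by metis

lemma rw_pick_run: "is_selection r s \<Longrightarrow> b \<le> p + 2 \<Longrightarrow> adj_sum (rw_pick r s) (layer_run a b) = 0"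
proof (rule rw_pick_run_zero)
  fix u assume sel: "is_selection r s" and b: "b \<le> p + 2" and u: "a \<le> u" "u < b - 1"
  have up: "u \<le> p" using u b by simp
  show "rw (r u) (r (Suc u)) = 0"
    using vanishes_rw[OF vanishes_next[OF up] selection_mem[OF sel] selection_mem[OF sel]] up by simp
qed

lemma rw_next: "t \<le> p \<Longrightarrow> b = t + 1 \<Longrightarrow> x \<in> S t \<Longrightarrow> y \<in> S b \<Longrightarrow> rw x y = 0"
  using vanishes_rw[OF vanishes_next[of t], of x y] by simp

lemma rw_0_layer_1: "x \<in> S 1 \<Longrightarrow> rw 0 x = 0"
  using vanishes_rw[OF vanishes_next[of 0], of 0 x] S_0 p_ge_4 by simp

lemma vanishes_jump3_inner:
  assumes u: "2 \<le> u" "u + 3 \<le> p + 1"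
  shows "vanishes u (u + 3)"
  unfolding vanishes_def
proof (intro ballI impI)
  fix x y assume x: "x \<in> S u" and y: "y \<in> S (u + 3)" and xy: "x \<noteq> y"
  let ?r = "rep(u := x, u + 3 := y)" and ?s = "alt(u := other u x, u + 3 := other (u + 3) y)"
  have sel: "is_selection ?r ?s" unfolding is_selection_def
    using u x y rep_mem alt_mem other_mem[of u x] other_mem[of "u + 3" y] by auto
  define ws where "ws = [(0, False), (1, False), (1, True)] @ layer_run 2 (u + 1) @ layer_run (u + 3) (p + 2)"
  have W: "is_template ws" unfolding is_template_def ws_def using u p_ge_4 by (auto simp: mem_layer_run)
  have ne: "[(0, False), (1, False), (1, True)] \<noteq> []" "layer_run 2 (u + 1) @ layer_run (u + 3) (p + 2) \<noteq> []"
     "layer_run 2 (u + 1) \<noteq> []" "layer_run (u + 3) (p + 2) \<noteq> []" using u by auto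
  have D: "adj_sum layer_jump ws = 1"
    unfolding ws_def adj_sum_append[OF ne(1,2)] adj_sum_append[OF ne(3,4)] using u p_ge_4 by (simp add: layer_jump_def jump_coeff_def; arith)
  have "adj_sum (rw_pick ?r ?s) ws = rw 0 (rep 1) + rw (rep 1) (alt 1) + rw (alt 1) (?r 2) + rw x y"
    unfolding ws_def adj_sum_append[OF ne(1,2)] adj_sum_append[OF ne(3,4)] using u rw_pick_run[OF sel]
    by (simp add: rw_pick_def)
  moreover have "rw 0 (rep 1) = 0" using rw_0_layer_1 rep_mem p_ge_4 by simp
  moreover have "rw (alt 1) (?r 2) = 0"
  proof (rule rw_next[of 1 2])
    show "?r 2 \<in> S 2" using selection_mem[OF sel, of 2] p_ge_4 by simp
  qed (use alt_mem p_ge_4 in simp_all)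
  ultimately show "rw x y = 0" using rw_tight_template[OF sel W D] rw_rep_alt_1 by simp
qed

lemma rw_alt_1_layer_4:
  assumes y: "y \<in> S 4"
  shows "rw (alt 1) y = 0"
proof -
  let ?r = "rep(4 := y)" and ?s = "alt(4 := other 4 y)"
  have sel: "is_selection ?r ?s" unfolding is_selection_def
    using p_ge_4 y rep_mem alt_mem other_mem[of 4 y] by auto
  define ws where "ws = [(0, False), (1, False), (1, True), (4, False)] @ layer_run 5 (p + 2)"
  have W: "is_template ws" unfolding is_template_def ws_def using p_ge_4 by (auto simp: mem_layer_run)
  have ne: "[(0, False), (1, False), (1, True), (4, False)] \<noteq> []" "layer_run 5 (p + 2) \<noteq> []"
    using p_ge_4 by auto
  have D: "adj_sum layer_jump ws = 1"
    unfolding ws_def adj_sum_append[OF ne] using p_ge_4 by (simp add: layer_jump_def jump_coeff_def; arith)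
  have "adj_sum (rw_pick ?r ?s) ws = rw 0 (rep 1) + rw (rep 1) (alt 1) + rw (alt 1) y + rw y (rep 5)"
    unfolding ws_def adj_sum_append[OF ne] using rw_pick_run[OF sel] p_ge_4
    by (simp add: rw_pick_def)
  moreover have "rw 0 (rep 1) = 0" using rw_0_layer_1 rep_mem p_ge_4 by simp
  moreover have "rw y (rep 5) = 0" by (rule rw_next[of 4 5]) (use y rep_mem p_ge_4 in simp_all)
  ultimately show ?thesis using rw_tight_template[OF sel W D] rw_rep_alt_1 by simp
qed

lemma vanishes_4_4: "vanishes 4 4"
  unfolding vanishes_def
proof (intro ballI impI)
  fix x y assume x: "x \<in> S 4" and y: "y \<in> S 4" and xy: "x \<noteq> y"
  let ?r = "rep(4 := x)" and ?s = "alt(4 := y)"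
  have sel: "is_selection ?r ?s" unfolding is_selection_def
    using p_ge_4 x y xy rep_mem alt_mem by auto
  define ws where "ws = [(0, False), (1, True), (4, False), (4, True)] @ layer_run 5 (p + 2)"
  have W: "is_template ws" unfolding is_template_def ws_def using p_ge_4 by (auto simp: mem_layer_run)
  have ne: "[(0, False), (1, True), (4, False), (4, True)] \<noteq> []" "layer_run 5 (p + 2) \<noteq> []"
    using p_ge_4 by auto
  have D: "adj_sum layer_jump ws = 1"
    unfolding ws_def adj_sum_append[OF ne] using p_ge_4 by (simp add: layer_jump_def jump_coeff_def; arith)
  have "adj_sum (rw_pick ?r ?s) ws = rw 0 (alt 1) + rw (alt 1) x + rw x y + rw y (rep 5)"
    unfolding ws_def adj_sum_append[OF ne] using rw_pick_run[OF sel] p_ge_4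
    by (simp add: rw_pick_def)
  moreover have "rw 0 (alt 1) = 0" using rw_0_layer_1 alt_mem p_ge_4 by simp
  moreover have "rw (alt 1) x = 0" using rw_alt_1_layer_4 x by simp
  moreover have "rw y (rep 5) = 0" by (rule rw_next[of 4 5]) (use y rep_mem p_ge_4 in simp_all)
  ultimately show "rw x y = 0" using rw_tight_template[OF sel W D] by simp
qed

lemma vanishes_0_3: "vanishes 0 3"
  unfolding vanishes_def
proof (intro ballI impI)
  fix x y assume x: "x \<in> S 0" and y: "y \<in> S 3" and xy: "x \<noteq> y"
  have x0: "x = 0" using x S_0 by simp
  let ?r = "rep(3 := y)" and ?s = "alt(3 := other 3 y)"
  have sel: "is_selection ?r ?s" unfolding is_selection_def
    using p_ge_4 y rep_mem alt_mem other_mem[of 3 y] by auto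
  define ws where "ws = [(0, False), (3, False), (4, False), (4, True)] @ layer_run 5 (p + 2)"
  have W: "is_template ws" unfolding is_template_def ws_def using p_ge_4 by (auto simp: mem_layer_run)
  have ne: "[(0, False), (3, False), (4, False), (4, True)] \<noteq> []" "layer_run 5 (p + 2) \<noteq> []"
    using p_ge_4 by auto
  have D: "adj_sum layer_jump ws = 1"
    unfolding ws_def adj_sum_append[OF ne] using p_ge_4 by (simp add: layer_jump_def jump_coeff_def; arith)
  have "adj_sum (rw_pick ?r ?s) ws = rw 0 y + rw y (rep 4) + rw (rep 4) (alt 4) + rw (alt 4) (rep 5)"
    unfolding ws_def adj_sum_append[OF ne] using rw_pick_run[OF sel] p_ge_4
    by (simp add: rw_pick_def)
  moreover have "rw y (rep 4) = 0" by (rule rw_next[of 3 4]) (use y rep_mem p_ge_4 in simp_all)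
  moreover have "rw (rep 4) (alt 4) = 0"
    using vanishesD[OF vanishes_4_4, of "rep 4" "alt 4"] rep_mem[of 4] alt_mem[of 4] p_ge_4 by simp
  moreover have "rw (alt 4) (rep 5) = 0" by (rule rw_next[of 4 5]) (use alt_mem rep_mem p_ge_4 in simp_all)
  ultimately show "rw x y = 0" using rw_tight_template[OF sel W D] x0 by simp
qed

lemma vanishes_same_high:
  assumes t: "3 \<le> t" "t \<le> p"
  shows "vanishes t t"
  unfolding vanishes_def
proof (intro ballI impI)
  fix x y assume x: "x \<in> S t" and y: "y \<in> S t" and xy: "x \<noteq> y"
  let ?r = "rep(t := x)" and ?s = "alt(t := y)"
  have sel: "is_selection ?r ?s" unfolding is_selection_def
    using t x y xy rep_mem alt_mem by auto
  define ws where "ws = [(0, False)] @ layer_run 3 (t + 1) @ [(t, True)] @ layer_run (t + 1) (p + 2)"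
  have W: "is_template ws" unfolding is_template_def ws_def using t p_ge_4 by (auto simp: mem_layer_run)
  have ne: "[(0, False)] \<noteq> []" "layer_run 3 (t + 1) @ [(t, True)] @ layer_run (t + 1) (p + 2) \<noteq> []"
     "layer_run 3 (t + 1) \<noteq> []" "[(t, True)] @ layer_run (t + 1) (p + 2) \<noteq> []"
     "[(t, True)] \<noteq> []" "layer_run (t + 1) (p + 2) \<noteq> []" using t by auto
  have D: "adj_sum layer_jump ws = 1"
    unfolding ws_def adj_sum_append[OF ne(1,2)] adj_sum_append[OF ne(3,4)] adj_sum_append[OF ne(5,6)]
    using t p_ge_4 by (simp add: layer_jump_def jump_coeff_def; arith)
  have "adj_sum (rw_pick ?r ?s) ws = rw 0 (?r 3) + rw x y + rw y (rep (t + 1))"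
    unfolding ws_def adj_sum_append[OF ne(1,2)] adj_sum_append[OF ne(3,4)] adj_sum_append[OF ne(5,6)]
    using t rw_pick_run[OF sel] by (simp add: rw_pick_def)
  moreover have "rw 0 (?r 3) = 0"
    using vanishes_rw[OF vanishes_0_3, of 0 "?r 3"] S_0 selection_mem[OF sel, of 3] p_ge_4 by simp
  moreover have "rw y (rep (t + 1)) = 0" by (rule rw_next[of t]) (use t y rep_mem[of "t + 1"] in simp_all)
  ultimately show "rw x y = 0" using rw_tight_template[OF sel W D] by simp
qed

lemma vanishes_same_low:
  assumes t: "1 \<le> t" "t \<le> 2"
  shows "vanishes t t"
  unfolding vanishes_def
proof (intro ballI impI)
  fix x y assume x: "x \<in> S t" and y: "y \<in> S t" and xy: "x \<noteq> y"
  let ?r = "rep(t := x)" and ?s = "alt(t := y)"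
  have sel: "is_selection ?r ?s" unfolding is_selection_def
    using t p_ge_4 x y xy rep_mem alt_mem by auto
  have vanishes_2_5: "vanishes 2 5" using vanishes_jump3_inner[of 2] p_ge_4 by simp
  show "rw x y = 0"
  proof (cases "t = 1")
    case True
    define ws where "ws = [(0, False), (1, False), (1, True), (2, False)] @ layer_run 5 (p + 2)"
    have W: "is_template ws" unfolding is_template_def ws_def using p_ge_4 by (auto simp: mem_layer_run)
    have ne: "[(0, False), (1, False), (1, True), (2, False)] \<noteq> []" "layer_run 5 (p + 2) \<noteq> []"
      using p_ge_4 by auto
    have D: "adj_sum layer_jump ws = 1"
      unfolding ws_def adj_sum_append[OF ne] using p_ge_4 by (simp add: layer_jump_def jump_coeff_def; arith)
    have "adj_sum (rw_pick ?r ?s) ws = rw 0 x + rw x y + rw y (rep 2) + rw (rep 2) (rep 5)"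
      unfolding ws_def adj_sum_append[OF ne] using True rw_pick_run[OF sel] p_ge_4 by (simp add: rw_pick_def)
    moreover have "rw 0 x = 0" using rw_0_layer_1 x True by simp
    moreover have "rw y (rep 2) = 0" by (rule rw_next[of 1 2]) (use y True rep_mem p_ge_4 in simp_all)
    moreover have "rw (rep 2) (rep 5) = 0"
      using vanishes_rw[OF vanishes_2_5, of "rep 2" "rep 5"] rep_mem p_ge_4 by simp
    ultimately show ?thesis using rw_tight_template[OF sel W D] by simp
  next
    case False
    then have t2: "t = 2" using t by simp
    define ws where "ws = [(0, False), (1, False), (2, False), (2, True)] @ layer_run 5 (p + 2)"
    have W: "is_template ws" unfolding is_template_def ws_def using p_ge_4 by (auto simp: mem_layer_run)
    have ne: "[(0, False), (1, False), (2, False), (2, True)] \<noteq> []" "layer_run 5 (p + 2) \<noteq> []"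
      using p_ge_4 by auto
    have D: "adj_sum layer_jump ws = 1"
      unfolding ws_def adj_sum_append[OF ne] using p_ge_4 by (simp add: layer_jump_def jump_coeff_def; arith)
    have "adj_sum (rw_pick ?r ?s) ws = rw 0 (rep 1) + rw (rep 1) x + rw x y + rw y (rep 5)"
      unfolding ws_def adj_sum_append[OF ne] using t2 rw_pick_run[OF sel] p_ge_4 by (simp add: rw_pick_def)
    moreover have "rw 0 (rep 1) = 0" using rw_0_layer_1 rep_mem p_ge_4 by simp
    moreover have "rw (rep 1) x = 0" by (rule rw_next[of 1 2]) (use x t2 rep_mem p_ge_4 in simp_all)
    moreover have "rw y (rep 5) = 0"
      using vanishes_rw[OF vanishes_2_5, of y "rep 5"] y t2 rep_mem p_ge_4 by simp
    ultimately show ?thesis using rw_tight_template[OF sel W D] by simp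
  qed
qed

lemma vanishes_1_4: "vanishes 1 4"
  unfolding vanishes_def
proof (intro ballI impI)
  fix x y assume x: "x \<in> S 1" and y: "y \<in> S 4" and xy: "x \<noteq> y"
  let ?r = "rep(1 := x, 4 := y)" and ?s = "alt(1 := other 1 x, 4 := other 4 y)"
  have sel: "is_selection ?r ?s" unfolding is_selection_def
    using p_ge_4 x y rep_mem alt_mem other_mem[of 1 x] other_mem[of 4 y] by auto
  define ws where "ws = [(0, False), (1, False), (4, False), (4, True)] @ layer_run 5 (p + 2)"
  have W: "is_template ws" unfolding is_template_def ws_def using p_ge_4 by (auto simp: mem_layer_run)
  have ne: "[(0, False), (1, False), (4, False), (4, True)] \<noteq> []" "layer_run 5 (p + 2) \<noteq> []"
    using p_ge_4 by auto
  have D: "adj_sum layer_jump ws = 1"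
    unfolding ws_def adj_sum_append[OF ne] using p_ge_4 by (simp add: layer_jump_def jump_coeff_def; arith)
  have "adj_sum (rw_pick ?r ?s) ws = rw 0 x + rw x y + rw y (other 4 y) + rw (other 4 y) (rep 5)"
    unfolding ws_def adj_sum_append[OF ne] using rw_pick_run[OF sel] p_ge_4 by (simp add: rw_pick_def)
  moreover have "rw 0 x = 0" using rw_0_layer_1 x by simp
  moreover have "rw y (other 4 y) = 0"
    using vanishesD[OF vanishes_4_4, of y "other 4 y"] y other_mem[of 4 y] p_ge_4 by simp
  moreover have "rw (other 4 y) (rep 5) = 0" by (rule rw_next[of 4 5]) (use y other_mem[of 4 y] rep_mem p_ge_4 in simp_all)
  ultimately show "rw x y = 0" using rw_tight_template[OF sel W D] by simp
qed

lemma vanishes_same: "1 \<le> t \<Longrightarrow> t \<le> p \<Longrightarrow> vanishes t t"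
  using vanishes_same_low vanishes_same_high by (cases "t \<le> 2") auto

lemma vanishes_jump3: "t + 3 \<le> p + 1 \<Longrightarrow> vanishes t (t + 3)"
proof -
  assume t: "t + 3 \<le> p + 1"
  consider "t = 0" | "t = 1" | "2 \<le> t" by linarith
  then show ?thesis
  proof cases
    case 1 then show ?thesis using vanishes_0_3 by simp
  next
    case 2 then show ?thesis using vanishes_1_4 by simp
  next
    case 3 then show ?thesis using vanishes_jump3_inner t by simp
  qed
qed

lemma vanishes_long_back:
  assumes ab: "a + 5 \<le> b" "b \<le> p" and hyp: "vanishes (a + 1) b"
  shows "vanishes b (a + 4)"
  unfolding vanishes_def
proof (intro ballI impI)
  fix x y assume x: "x \<in> S b" and y: "y \<in> S (a + 4)" and xy: "x \<noteq> y"
  let ?r = "rep(b := x, a + 4 := y)" and ?s = "alt(b := other b x, a + 4 := other (a + 4) y)"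
  have sel: "is_selection ?r ?s" unfolding is_selection_def
    using ab x y rep_mem alt_mem other_mem[of b x] other_mem[of "a + 4" y] by auto
  define ws where "ws = layer_run 0 (a + 2) @ [(b, False)] @ layer_run (a + 4) b @ [(b, True)] @ layer_run (b + 1) (p + 2)"
  have W: "is_template ws" unfolding is_template_def ws_def using ab p_ge_4 by (auto simp: mem_layer_run)
  have D: "adj_sum layer_jump ws = 1"
    unfolding ws_def using ab p_ge_4 by (simp add: adj_sum_append adj_sum_Cons layer_jump_def jump_coeff_def; arith)
  have "adj_sum (rw_pick ?r ?s) ws = rw (rep (a + 1)) x + rw x y + rw (?r (b - 1)) (other b x) + rw (other b x) (?r (b + 1))"
    unfolding ws_def using ab rw_pick_run[OF sel] by (simp add: adj_sum_append adj_sum_Cons rw_pick_def)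
  moreover have "rw (rep (a + 1)) x = 0"
    using vanishes_rw[OF hyp, of "rep (a + 1)" x] rep_mem[of "a + 1"] x ab by simp
  moreover have "rw (?r (b - 1)) (other b x) = 0"
    by (rule rw_next[of "b - 1" b]) (use ab selection_mem[OF sel, of "b - 1"] other_mem[of b x] x in simp_all)
  moreover have "rw (other b x) (?r (b + 1)) = 0"
    by (rule rw_next[of b "b + 1"]) (use ab selection_mem[OF sel, of "b + 1"] other_mem[of b x] x in simp_all)
  ultimately show "rw x y = 0" using rw_tight_template[OF sel W D] by simp
qed

lemma rw_same_layer: "1 \<le> t \<Longrightarrow> t \<le> p \<Longrightarrow> x \<in> S t \<Longrightarrow> y \<in> S t \<Longrightarrow> x \<noteq> y \<Longrightarrow> rw x y = 0"
  using vanishesD[OF vanishes_same] by blast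

lemma rw_selection_same: "is_selection r s \<Longrightarrow> 1 \<le> t \<Longrightarrow> t \<le> p \<Longrightarrow> rw (r t) (s t) = 0"
  using rw_same_layer[of t "r t" "s t"] selection_mem[of r s t] selection_mem'[of r s t] by simp

lemma rw_selection_alt_next: "is_selection r s \<Longrightarrow> 1 \<le> t \<Longrightarrow> t \<le> p \<Longrightarrow> rw (s t) (r (t + 1)) = 0"
  using rw_next[of t "t + 1" "s t" "r (t + 1)"] selection_mem[of r s "t + 1"] selection_mem'[of r s t] by simp

lemma rw_selection_next_alt: "is_selection r s \<Longrightarrow> t + 1 \<le> p \<Longrightarrow> rw (r t) (s (t + 1)) = 0"
  using rw_next[of t "t + 1" "r t" "s (t + 1)"] selection_mem[of r s t] selection_mem'[of r s "t + 1"] by simp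

lemma rw_selection_alt_alt: "is_selection r s \<Longrightarrow> 1 \<le> t \<Longrightarrow> t + 1 \<le> p \<Longrightarrow> rw (s t) (s (t + 1)) = 0"
  using rw_next[of t "t + 1" "s t" "s (t + 1)"] selection_mem'[of r s t] selection_mem'[of r s "t + 1"] by simp

lemma vanishes_long_step:
  assumes ab: "a + 5 \<le> b" "b \<le> p" and hyp: "vanishes b (a + 4)"
  shows "vanishes a b"
  unfolding vanishes_def
proof (intro ballI impI)
  fix x y assume x: "x \<in> S a" and y: "y \<in> S b" and xy: "x \<noteq> y"
  let ?r = "rep(a := x, b := y)" and ?s = "alt(a := other a x, b := other b y)"
  have sel: "is_selection ?r ?s" unfolding is_selection_def
    using ab x y rep_mem alt_mem other_mem[of a x] other_mem[of b y] by auto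
  define ws where "ws = layer_run 0 (a + 1) @ [(b, False)] @ layer_run (a + 4) b @ [(b - 1, True), (b, True)] @ layer_run (b + 1) (p + 2)"
  have W: "is_template ws" unfolding is_template_def ws_def using ab p_ge_4 by (auto simp: mem_layer_run)
  have D: "adj_sum layer_jump ws = 1"
    unfolding ws_def using ab p_ge_4 by (simp add: adj_sum_append adj_sum_Cons layer_jump_def jump_coeff_def; arith)
  have "adj_sum (rw_pick ?r ?s) ws = rw x y + rw y (?r (a + 4)) + rw (?r (b - 1)) (?s (b - 1))
      + rw (?s (b - 1)) (?s b) + rw (?s b) (?r (b + 1))"
    unfolding ws_def using ab rw_pick_run[OF sel] by (simp add: adj_sum_append adj_sum_Cons rw_pick_def)
  moreover have "rw y (?r (a + 4)) = 0"
    using vanishes_rw[OF hyp y selection_mem[OF sel, of "a + 4"]] ab by simp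
  moreover have "rw (?r (b - 1)) (?s (b - 1)) = 0"
    by (rule rw_selection_same[OF sel]) (use ab in simp_all)
  moreover have "rw (?s (b - 1)) (?s b) = 0"
    using rw_selection_alt_alt[OF sel, of "b - 1"] ab by simp
  moreover have "rw (?s b) (?r (b + 1)) = 0"
    by (rule rw_selection_alt_next[OF sel]) (use ab in simp_all)
  ultimately show "rw x y = 0" using rw_tight_template[OF sel W D] by simp
qed

lemma vanishes_jump4_inner:
  assumes ab: "b = a + 4" "b \<le> p - 1"
  shows "vanishes a b"
  unfolding vanishes_def
proof (intro ballI impI)
  fix x y assume x: "x \<in> S a" and y: "y \<in> S b" and xy: "x \<noteq> y"
  let ?r = "rep(a := x, b := y)" and ?s = "alt(a := other a x, b := other b y)"
  have sel: "is_selection ?r ?s" unfolding is_selection_def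
    using ab x y rep_mem alt_mem other_mem[of a x] other_mem[of b y] by auto
  define ws where "ws = layer_run 0 (a + 1) @ [(b, False), (b, True)] @ layer_run (b + 1) (p + 1) @ [(p, True), (p + 1, False)]"
  have W: "is_template ws" unfolding is_template_def ws_def using ab p_ge_4 by (auto simp: mem_layer_run)
  have D: "adj_sum layer_jump ws = 1"
    unfolding ws_def using ab p_ge_4 by (simp add: adj_sum_append adj_sum_Cons layer_jump_def jump_coeff_def; arith)
  have "adj_sum (rw_pick ?r ?s) ws = rw x y + rw y (?s b) + rw (?s b) (?r (b + 1))
      + rw (?r p) (?s p) + rw (?s p) (?r (p + 1))"
    unfolding ws_def using ab rw_pick_run[OF sel] by (simp add: adj_sum_append adj_sum_Cons rw_pick_def)
  moreover have "rw y (?s b) = 0"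
    using rw_selection_same[OF sel, of b] ab by simp
  moreover have "rw (?s b) (?r (b + 1)) = 0"
    by (rule rw_selection_alt_next[OF sel]) (use ab in simp_all)
  moreover have "rw (?r p) (?s p) = 0"
    by (rule rw_selection_same[OF sel]) (use p_ge_4 in simp_all)
  moreover have "rw (?s p) (?r (p + 1)) = 0"
    by (rule rw_selection_alt_next[OF sel]) (use p_ge_4 in simp_all)
  ultimately show "rw x y = 0" using rw_tight_template[OF sel W D] by simp
qed

lemma vanishes_jump4_last:
  assumes p6: "6 \<le> p"
  shows "vanishes (p - 4) p"
  unfolding vanishes_def
proof (intro ballI impI)
  fix x y assume x: "x \<in> S (p - 4)" and y: "y \<in> S p" and xy: "x \<noteq> y"
  let ?r = "rep(p - 4 := x, p := y)" and ?s = "alt(p - 4 := other (p - 4) x, p := other p y)"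
  have sel: "is_selection ?r ?s" unfolding is_selection_def
    using p6 x y rep_mem alt_mem other_mem[of "p - 4" x] other_mem[of p y] by auto
  have ne4: "p - 4 \<noteq> p" "p - 4 \<noteq> 1" "p - 4 \<noteq> 0" "p - 4 \<noteq> 2 \<or> p = 6"
    using p6 by auto
  define ws where "ws = [(0, False), (1, False), (1, True)] @ layer_run 2 (p - 3) @ [(p, False), (p, True), (p + 1, False)]"
  have W: "is_template ws" unfolding is_template_def ws_def using p6 by (auto simp: mem_layer_run)
  have D: "adj_sum layer_jump ws = 1"
    unfolding ws_def using p6 by (simp add: adj_sum_append adj_sum_Cons layer_jump_def jump_coeff_def; arith)
  have "adj_sum (rw_pick ?r ?s) ws = rw 0 (?r 1) + rw (?r 1) (?s 1) + rw (?s 1) (?r 2) + rw x y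
      + rw y (?s p) + rw (?s p) (?r (p + 1))"
    unfolding ws_def using p6 ne4 rw_pick_run[OF sel] by (simp add: adj_sum_append adj_sum_Cons rw_pick_def)
  moreover have "rw 0 (?r 1) = 0" using rw_0_layer_1 selection_mem[OF sel, of 1] p_ge_4 by simp
  moreover have "rw (?r 1) (?s 1) = 0"
    by (rule rw_selection_same[OF sel]) (use p_ge_4 in simp_all)
  moreover have "rw (?s 1) (?r 2) = 0"
    by (rule rw_selection_alt_next[OF sel, of 1, unfolded one_add_one]) (use p_ge_4 in simp_all)
  moreover have "rw y (?s p) = 0"
    using rw_selection_same[OF sel, of p] p6 ne4 by simp
  moreover have "rw (?s p) (?r (p + 1)) = 0"
    using rw_selection_alt_next[OF sel, of p] p6 by simp
  ultimately show "rw x y = 0" using rw_tight_template[OF sel W D] by simp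
qed

lemma vanishes_1_5:
  assumes p5: "p = 5"
  shows "vanishes 1 5"
  unfolding vanishes_def
proof (intro ballI impI)
  fix x y assume x: "x \<in> S 1" and y: "y \<in> S 5" and xy: "x \<noteq> y"
  let ?r = "rep(1 := other 1 x, 5 := y)" and ?s = "alt(1 := x, 5 := other 5 y)"
  have sel: "is_selection ?r ?s" unfolding is_selection_def
    using p5 x y rep_mem alt_mem other_mem[of 1 x] other_mem[of 5 y] by auto
  define ws :: "(nat \<times> bool) list" where "ws = [(0, False), (1, False), (1, True), (5, False), (5, True), (6, False)]"
  have W: "is_template ws" unfolding is_template_def ws_def using p5 by auto
  have D: "adj_sum layer_jump ws = 1"
    unfolding ws_def layer_jump_def jump_coeff_def using p5 by simp
  have "adj_sum (rw_pick ?r ?s) ws = rw 0 (?r 1) + rw (?r 1) x + rw x y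
      + rw y (?s 5) + rw (?s 5) (?r 6)"
    unfolding ws_def by (simp add: rw_pick_def)
  moreover have "rw 0 (?r 1) = 0" using rw_0_layer_1 selection_mem[OF sel, of 1] p_ge_4 by simp
  moreover have "rw (?r 1) x = 0"
    using rw_selection_same[OF sel, of 1] p_ge_4 by simp
  moreover have "rw y (?s 5) = 0"
    using rw_selection_same[OF sel, of 5] p5 by simp
  moreover have "rw (?s 5) (?r 6) = 0"
    using rw_selection_alt_next[OF sel, of 5] p5 by simp
  ultimately show "rw x y = 0" using rw_tight_template[OF sel W D] by simp
qed

lemma vanishes_jump4:
  assumes h: "b = a + 4" "b \<le> p" "\<not> (a = 0 \<and> p = 4)"
  shows "vanishes a b"
proof (cases "b \<le> p - 1")
  case True
  then show ?thesis using vanishes_jump4_inner h by simp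
next
  case False
  then have bp: "b = p" using h by simp
  consider "2 \<le> a" | "a = 1" | "a = 0" by linarith
  then show ?thesis
  proof cases
    case 1
    then have "6 \<le> p" "a = p - 4" using h bp by auto
    then show ?thesis using vanishes_jump4_last bp by simp
  next
    case 2
    then show ?thesis using vanishes_1_5 h bp by simp
  next
    case 3
    then show ?thesis using h bp by simp
  qed
qed

lemma vanishes_long:
  assumes "a + 4 \<le> b" "b \<le> p" "\<not> (a = 0 \<and> b = 4 \<and> p = 4)"
  shows "vanishes a b"
  using assms
proof (induction "b - a" arbitrary: a rule: less_induct)
  case less
  show ?case
  proof (cases "b = a + 4")
    case True
    then show ?thesis using vanishes_jump4 less.prems by simp
  next
    case False
    then have "vanishes (a + 1) b"
      using less.hyps[of "a + 1"] less.prems by simp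
    then show ?thesis
      using vanishes_long_back[of a b] vanishes_long_step[of a b] less.prems False by simp
  qed
qed

lemma vanishes_back_short:
  assumes h: "1 \<le> J" "J < I" "I \<le> p - 2" and hyp: "vanishes J (I + 3)"
  shows "vanishes I J"
  unfolding vanishes_def
proof (intro ballI impI)
  fix x y assume x: "x \<in> S I" and y: "y \<in> S J" and xy: "x \<noteq> y"
  let ?r = "rep(I := x, J := other J y)" and ?s = "alt(I := other I x, J := y)"
  have sel: "is_selection ?r ?s" unfolding is_selection_def
    using h p_ge_4 x y rep_mem alt_mem other_mem[of I x] other_mem[of J y] by auto
  define ws where "ws = layer_run 0 (I + 1) @ [(J, True)] @ layer_run (I + 3) (p + 2)"
  have W: "is_template ws" unfolding is_template_def ws_def using h p_ge_4 by (auto simp: mem_layer_run)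
  have D: "adj_sum layer_jump ws = 1"
    unfolding ws_def using h p_ge_4 by (simp add: adj_sum_append adj_sum_Cons layer_jump_def jump_coeff_def; arith)
  have "adj_sum (rw_pick ?r ?s) ws = rw x y + rw y (?r (I + 3))"
    unfolding ws_def using h p_ge_4 rw_pick_run[OF sel] by (simp add: adj_sum_append adj_sum_Cons rw_pick_def)
  moreover have "rw y (?r (I + 3)) = 0"
    using vanishes_rw[OF hyp y selection_mem[OF sel, of "I + 3"]] h by simp
  ultimately show "rw x y = 0" using rw_tight_template[OF sel W D] by simp
qed

lemma vanishes_to_last:
  assumes h: "1 \<le> a" "a + 4 \<le> p" and hyp: "vanishes (p - 3) a"
  shows "vanishes a (p + 1)"
  unfolding vanishes_def
proof (intro ballI impI)
  fix x y assume x: "x \<in> S a" and y: "y \<in> S (p + 1)" and xy: "x \<noteq> y"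
  have yn: "y = n" using y S_last by simp
  let ?r = "rep(a := other a x)" and ?s = "alt(a := x)"
  have sel: "is_selection ?r ?s" unfolding is_selection_def
    using h p_ge_4 x rep_mem alt_mem other_mem[of a x] by auto
  define ws where "ws = layer_run 0 (p - 2) @ [(p - 3, True), (a, True), (p + 1, False)]"
  have W: "is_template ws" unfolding is_template_def ws_def using h p_ge_4 by (auto simp: mem_layer_run)
  have D: "adj_sum layer_jump ws = 1"
    unfolding ws_def using h p_ge_4 by (simp add: adj_sum_append adj_sum_Cons layer_jump_def jump_coeff_def; arith)
  have "adj_sum (rw_pick ?r ?s) ws = rw (?r (p - 3)) (?s (p - 3)) + rw (?s (p - 3)) x + rw x n"
    unfolding ws_def using h p_ge_4 rw_pick_run[OF sel] by (simp add: adj_sum_append adj_sum_Cons rw_pick_def)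
  moreover have "rw (?r (p - 3)) (?s (p - 3)) = 0"
    by (rule rw_selection_same[OF sel]) (use h in simp_all)
  moreover have "rw (?s (p - 3)) x = 0"
    using vanishes_rw[OF hyp selection_mem'[OF sel, of "p - 3", THEN conjunct1] x] h by simp
  ultimately show "rw x y = 0" using rw_tight_template[OF sel W D] yn by simp
qed

lemma vanishes_to_last_from_p_minus_3:
  assumes p5: "5 \<le> p"
  shows "vanishes (p - 3) (p + 1)"
  unfolding vanishes_def
proof (intro ballI impI)
  fix x y assume x: "x \<in> S (p - 3)" and y: "y \<in> S (p + 1)" and xy: "x \<noteq> y"
  have yn: "y = n" using y S_last by simp
  have ne: "p - 3 \<noteq> 1" "p - 3 \<noteq> 0" "p - 3 \<noteq> p" "Suc p \<noteq> p - 3" "p - 3 \<noteq> 2 \<or> p = 5"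
    using p5 by auto
  let ?r = "rep(p - 3 := other (p - 3) x)" and ?s = "alt(p - 3 := x)"
  have sel: "is_selection ?r ?s" unfolding is_selection_def
    using p5 x rep_mem alt_mem other_mem[of "p - 3" x] by auto
  define ws where "ws = [(0, False), (1, False), (1, True)] @ layer_run 2 (p - 2) @ [(p - 3, True), (p + 1, False)]"
  have W: "is_template ws" unfolding is_template_def ws_def using p5 by (auto simp: mem_layer_run)
  have D: "adj_sum layer_jump ws = 1"
    unfolding ws_def using p5 by (simp add: adj_sum_append adj_sum_Cons layer_jump_def jump_coeff_def; arith)
  have "adj_sum (rw_pick ?r ?s) ws = rw 0 (?r 1) + rw (?r 1) (?s 1) + rw (?s 1) (?r 2)
      + rw (?r (p - 3)) x + rw x n"
    unfolding ws_def using p5 ne rw_pick_run[OF sel] by (simp add: adj_sum_append adj_sum_Cons rw_pick_def)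
  moreover have "rw 0 (?r 1) = 0" using rw_0_layer_1 selection_mem[OF sel, of 1] p_ge_4 by simp
  moreover have "rw (?r 1) (?s 1) = 0"
    by (rule rw_selection_same[OF sel]) (use p_ge_4 in simp_all)
  moreover have "rw (?s 1) (?r 2) = 0"
    by (rule rw_selection_alt_next[OF sel, of 1, unfolded one_add_one]) (use p_ge_4 in simp_all)
  moreover have "rw (?r (p - 3)) x = 0"
    using rw_selection_same[OF sel, of "p - 3"] p5 by simp
  ultimately show "rw x y = 0" using rw_tight_template[OF sel W D] yn by simp
qed

lemma vanishes_4_2:
  assumes p_eq: "p = 4"
  shows "vanishes p 2"
  unfolding vanishes_def
proof (intro ballI impI)
  fix x y assume x: "x \<in> S p" and y: "y \<in> S 2" and xy: "x \<noteq> y"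
  have ne: "p \<noteq> 1" "p \<noteq> 2" "p \<noteq> 0" "p \<noteq> 3" using p_eq by auto
  let ?r = "rep(p := x, 2 := y)" and ?s = "alt(p := other p x, 2 := other 2 y)"
  have sel: "is_selection ?r ?s" unfolding is_selection_def
    using p_ge_4 x y rep_mem alt_mem other_mem[of p x] other_mem[of 2 y] by auto
  define ws :: "(nat \<times> bool) list" where "ws = [(0, False), (1, False), (p, False), (2, False), (p + 1, False)]"
  have W: "is_template ws" unfolding is_template_def ws_def using p_eq by auto
  have D: "adj_sum layer_jump ws = 1"
    unfolding ws_def layer_jump_def jump_coeff_def using p_eq by simp
  have "adj_sum (rw_pick ?r ?s) ws = rw 0 (rep 1) + rw (rep 1) x + rw x y + rw y n"
    unfolding ws_def using ne by (simp add: rw_pick_def)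
  moreover have "rw 0 (rep 1) = 0" using rw_0_layer_1 rep_mem p_ge_4 by simp
  moreover have "rw (rep 1) x = 0"
  proof -
    have "vanishes 1 p" using vanishes_jump3[of 1] p_eq by simp
    then show ?thesis using vanishes_rw[of 1 p "rep 1" x] rep_mem[of 1] x ne by simp
  qed
  moreover have "rw y n = 0"
  proof -
    have "vanishes 2 (p + 1)" using vanishes_jump3[of 2] p_eq by simp
    then show ?thesis using vanishes_rw[of 2 "p + 1" y n] y S_last ne by simp
  qed
  ultimately show "rw x y = 0" using rw_tight_template[OF sel W D] by simp
qed

lemma vanishes_0_4:
  assumes p_eq: "p = 4"
  shows "vanishes 0 p"
  unfolding vanishes_def
proof (intro ballI impI)
  fix x y assume x: "x \<in> S 0" and y: "y \<in> S p" and xy: "x \<noteq> y"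
  have x0: "x = 0" using x S_0 by simp
  have ne: "p \<noteq> 1" "p \<noteq> 2" "p \<noteq> 0" "p \<noteq> 3" using p_eq by auto
  let ?r = "rep(p := y)" and ?s = "alt(p := other p y)"
  have sel: "is_selection ?r ?s" unfolding is_selection_def
    using p_ge_4 y rep_mem alt_mem other_mem[of p y] by auto
  define ws :: "(nat \<times> bool) list" where "ws = [(0, False), (p, False), (2, False), (3, False), (p + 1, False)]"
  have W: "is_template ws" unfolding is_template_def ws_def using p_eq by auto
  have D: "adj_sum layer_jump ws = 1"
    unfolding ws_def layer_jump_def jump_coeff_def using p_eq by simp
  have "adj_sum (rw_pick ?r ?s) ws = rw 0 y + rw y (rep 2) + rw (rep 2) (rep 3) + rw (rep 3) n"
    unfolding ws_def using ne by (simp add: rw_pick_def)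
  moreover have "rw y (rep 2) = 0"
    using vanishes_rw[OF vanishes_4_2[OF p_eq] y, of "rep 2"] rep_mem[of 2] ne p_ge_4 by simp
  moreover have "rw (rep 2) (rep 3) = 0" by (rule rw_next[of 2 3]) (use rep_mem p_ge_4 in simp_all)
  moreover have "rw (rep 3) n = 0"
  proof -
    have "vanishes 3 (p + 1)" using vanishes_skip[of 3] p_eq by simp
    then show ?thesis using vanishes_rw[of 3 "p + 1" "rep 3" n] rep_mem[of 3] S_last ne p_ge_4 by simp
  qed
  ultimately show "rw x y = 0" using rw_tight_template[OF sel W D] x0 by simp
qed

lemma vanishes_back_to_1:
  assumes I: "I = p - 1 \<or> I = p" and hyp: "vanishes 0 I"
  shows "vanishes I 1"
  unfolding vanishes_def
proof (intro ballI impI)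
  fix x y assume x: "x \<in> S I" and y: "y \<in> S 1" and xy: "x \<noteq> y"
  have Ib: "3 \<le> I" "I \<le> p" using I p_ge_4 by auto
  have ne: "p - 2 \<noteq> I" "p - 2 \<noteq> 1" "p - Suc (Suc 0) = p - 2" using I p_ge_4 by auto
  let ?r = "rep(I := x, 1 := y)" and ?s = "alt(I := other I x, 1 := other 1 y)"
  have sel: "is_selection ?r ?s" unfolding is_selection_def
    using p_ge_4 Ib x y rep_mem alt_mem other_mem[of I x] other_mem[of 1 y] by auto
  define ws where "ws = [(0, False), (I, False), (1, False)] @ layer_run 2 (p - 1) @ [(p + 1, False)]"
  have W: "is_template ws" unfolding is_template_def ws_def using p_ge_4 I by (auto simp: mem_layer_run)
  have D: "adj_sum layer_jump ws = 1"
    unfolding ws_def using p_ge_4 I by (simp add: adj_sum_append adj_sum_Cons layer_jump_def jump_coeff_def; arith)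
  have "adj_sum (rw_pick ?r ?s) ws = rw 0 x + rw x y + rw y (?r 2) + rw (rep (p - 2)) n"
    unfolding ws_def using p_ge_4 Ib ne rw_pick_run[OF sel] by (simp add: adj_sum_append adj_sum_Cons rw_pick_def)
  moreover have "rw 0 x = 0" using vanishes_rw[OF hyp, of 0 x] S_0 x Ib by simp
  moreover have "rw y (?r 2) = 0" by (rule rw_next[of 1 2]) (use y selection_mem[OF sel, of 2] p_ge_4 Ib in simp_all)
  moreover have "rw (rep (p - 2)) n = 0"
  proof -
    have "vanishes (p - 2) (p - 2 + 3)" using vanishes_jump3[of "p - 2"] p_ge_4 by simp
    then show ?thesis using vanishes_rw[of "p - 2" "p - 2 + 3" "rep (p - 2)" n] rep_mem[of "p - 2"] S_last p_ge_4 by simp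
  qed
  ultimately show "rw x y = 0" using rw_tight_template[OF sel W D] by simp
qed

lemma vanishes_p_2:
  assumes hyp: "vanishes 0 p"
  shows "vanishes p 2"
  unfolding vanishes_def
proof (intro ballI impI)
  fix x y assume x: "x \<in> S p" and y: "y \<in> S 2" and xy: "x \<noteq> y"
  let ?r = "rep(p := x, 2 := y)" and ?s = "alt(p := other p x, 2 := other 2 y)"
  have sel: "is_selection ?r ?s" unfolding is_selection_def
    using p_ge_4 x y rep_mem alt_mem other_mem[of p x] other_mem[of 2 y] by auto
  define ws where "ws = [(0, False), (p, False), (2, False)] @ layer_run 3 p @ [(p + 1, False)]"
  have W: "is_template ws" unfolding is_template_def ws_def using p_ge_4 by (auto simp: mem_layer_run)
  have D: "adj_sum layer_jump ws = 1"
    unfolding ws_def using p_ge_4 by (simp add: adj_sum_append adj_sum_Cons layer_jump_def jump_coeff_def; arith)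
  have "adj_sum (rw_pick ?r ?s) ws = rw 0 x + rw x y + rw y (?r 3) + rw (?r (p - 1)) n"
    unfolding ws_def using p_ge_4 rw_pick_run[OF sel] by (simp add: adj_sum_append adj_sum_Cons rw_pick_def)
  moreover have "rw 0 x = 0" using vanishes_rw[OF hyp, of 0 x] S_0 x p_ge_4 by simp
  moreover have "rw y (?r 3) = 0" by (rule rw_next[of 2 3]) (use y selection_mem[OF sel, of 3] p_ge_4 in simp_all)
  moreover have "rw (?r (p - 1)) n = 0"
  proof -
    have "vanishes (p - 1) (p - 1 + 2)" using vanishes_skip[of "p - 1"] p_ge_4 by simp
    then show ?thesis using vanishes_rw[of "p - 1" "p - 1 + 2" "?r (p - 1)" n] selection_mem[OF sel, of "p - 1"] S_last p_ge_4 by simp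
  qed
  ultimately show "rw x y = 0" using rw_tight_template[OF sel W D] by simp
qed

lemma vanishes_p_minus_1_2:
  assumes hyp: "vanishes 0 (p - 1)"
  shows "vanishes (p - 1) 2"
  unfolding vanishes_def
proof (intro ballI impI)
  fix x y assume x: "x \<in> S (p - 1)" and y: "y \<in> S 2" and xy: "x \<noteq> y"
  have ne: "p - 1 \<noteq> 2" "p - 1 \<noteq> 0" "p - 1 \<noteq> p" using p_ge_4 by auto
  let ?r = "rep(p - 1 := x, 2 := y)" and ?s = "alt(p - 1 := other (p - 1) x, 2 := other 2 y)"
  have sel: "is_selection ?r ?s" unfolding is_selection_def
    using p_ge_4 x y rep_mem alt_mem other_mem[of "p - 1" x] other_mem[of 2 y] by auto
  define ws where "ws = [(0, False), (p - 1, False), (2, False)] @ layer_run 3 (p - 1) @ layer_run p (p + 2)"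
  have W: "is_template ws" unfolding is_template_def ws_def using p_ge_4 by (auto simp: mem_layer_run)
  have wz: "rw 0 x = 0" using vanishes_rw[OF hyp, of 0 x] S_0 x p_ge_4 by simp
  have D: "adj_sum layer_jump ws = 1"
  proof (cases "p = 4")
    case True
    then have "layer_run 3 (p - 1) = []" by (simp add: layer_run_empty)
    then show ?thesis unfolding ws_def using p_ge_4 by (simp add: adj_sum_append adj_sum_Cons layer_jump_def jump_coeff_def; arith)
  next
    case False
    then show ?thesis unfolding ws_def using p_ge_4 by (simp add: adj_sum_append adj_sum_Cons layer_jump_def jump_coeff_def; arith)
  qed
  have rz: "rw (rep (p - 2)) (rep p) = 0" if "p \<noteq> 4"
  proof -
    have "vanishes (p - 2) (p - 2 + 2)" using vanishes_skip[of "p - 2"] p_ge_4 by simp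
    moreover have "Suc (Suc (p - 2)) = p" using p_ge_4 by simp
    ultimately show ?thesis using vanishes_rw[of "p - 2" "p - 2 + 2" "rep (p - 2)" "rep p"] rep_mem[of "p - 2"] rep_mem[of p] p_ge_4 by simp
  qed
  show "rw x y = 0"
  proof (cases "p = 4")
    case True
    then have e: "layer_run 3 (p - 1) = []" by (simp add: layer_run_empty)
    have e2: "p - 2 = 2" "p - Suc (Suc 0) = 2" using True by auto
    have "adj_sum (rw_pick ?r ?s) ws = rw 0 x + rw x y + rw y (rep p)"
      unfolding ws_def e using p_ge_4 ne e2 rw_pick_run[OF sel] by (simp add: adj_sum_append adj_sum_Cons rw_pick_def)
    moreover have "rw y (rep p) = 0"
    proof -
      have "vanishes 2 (2 + 2)" using vanishes_skip[of 2] p_ge_4 by simp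
      then show ?thesis using vanishes_rw[of 2 "2 + 2" y "rep p"] y rep_mem[of p] True by simp
    qed
    ultimately show ?thesis using rw_tight_template[OF sel W D] wz by simp
  next
    case False
    have ne2: "p - 1 \<noteq> 3" "p - 2 \<noteq> 2" "p - Suc (Suc 0) = p - 2" "p - 2 \<noteq> p - 1"
      using False p_ge_4 by auto
    have "adj_sum (rw_pick ?r ?s) ws = rw 0 x + rw x y + rw y (rep 3) + rw (rep (p - 2)) (rep p)"
      unfolding ws_def using p_ge_4 ne ne2 False rw_pick_run[OF sel] by (simp add: adj_sum_append adj_sum_Cons rw_pick_def)
    moreover have "rw y (rep 3) = 0" by (rule rw_next[of 2 3]) (use y rep_mem p_ge_4 in simp_all)
    ultimately show ?thesis using rw_tight_template[OF sel W D] wz rz False by simp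
  qed
qed

lemma vanishes_1_last_4:
  assumes p_eq: "p = 4"
  shows "vanishes 1 (p + 1)"
  unfolding vanishes_def
proof (intro ballI impI)
  fix x y assume x: "x \<in> S 1" and y: "y \<in> S (p + 1)" and xy: "x \<noteq> y"
  have yn: "y = n" using y S_last by simp
  have ne: "p \<noteq> 1" "p \<noteq> 2" "p \<noteq> 0" "p \<noteq> 3" using p_eq by auto
  let ?r = "rep(1 := other 1 x)" and ?s = "alt(1 := x)"
  have sel: "is_selection ?r ?s" unfolding is_selection_def
    using p_ge_4 x rep_mem alt_mem other_mem[of 1 x] by auto
  define ws :: "(nat \<times> bool) list" where "ws = [(0, False), (1, False), (p, False), (1, True), (p + 1, False)]"
  have W: "is_template ws" unfolding is_template_def ws_def using p_eq by auto
  have D: "adj_sum layer_jump ws = 1"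
    unfolding ws_def layer_jump_def jump_coeff_def using p_eq by simp
  have "adj_sum (rw_pick ?r ?s) ws = rw 0 (other 1 x) + rw (other 1 x) (rep p) + rw (rep p) x + rw x n"
    unfolding ws_def using ne by (simp add: rw_pick_def)
  moreover have "rw 0 (other 1 x) = 0" using rw_0_layer_1 other_mem[of 1 x] x p_ge_4 by simp
  moreover have "rw (other 1 x) (rep p) = 0"
  proof -
    have "vanishes 1 p" using vanishes_jump3[of 1] p_eq by simp
    then show ?thesis using vanishes_rw[of 1 p "other 1 x" "rep p"] other_mem[of 1 x] x rep_mem[of p] ne p_ge_4 by simp
  qed
  moreover have "rw (rep p) x = 0"
  proof -
    have "vanishes p 1" using vanishes_back_to_1[of p] vanishes_0_4[OF p_eq] by simp
    then show ?thesis using vanishes_rw[of p 1 "rep p" x] x rep_mem[of p] ne by simp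
  qed
  ultimately show "rw x y = 0" using rw_tight_template[OF sel W D] yn by simp
qed

lemma vanishes_forward:
  assumes h: "a + 2 \<le> b" "b \<le> p + 1" "\<not> (a = 0 \<and> b = p + 1)"
  shows "vanishes a b"
proof -
  consider "b = a + 2" | "b = a + 3" | "a + 4 \<le> b" "b \<le> p" | "a + 4 \<le> b" "b = p + 1" using h by linarith
  then show ?thesis
  proof cases
    case 1 then show ?thesis using vanishes_skip h by simp
  next
    case 2 then show ?thesis using vanishes_jump3 h by simp
  next
    case 3
    show ?thesis
    proof (cases "a = 0 \<and> b = 4 \<and> p = 4")
      case True then show ?thesis using vanishes_0_4 by simp
    next
      case False then show ?thesis using vanishes_long 3 by simp
    qed
  next
    case 4
    have a1: "1 \<le> a" using h 4 by simp
    show ?thesis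
    proof (cases "p = 4")
      case True
      then have "a = 1" using 4 a1 by simp
      then show ?thesis using vanishes_1_last_4[OF True] 4 by simp
    next
      case False
      then have p5: "5 \<le> p" using p_ge_4 by simp
      show ?thesis
      proof (cases "a = p - 3")
        case True then show ?thesis using vanishes_to_last_from_p_minus_3[OF p5] 4 by simp
      next
        case False
        then have a4: "a + 4 \<le> p" using 4 by simp
        have "vanishes a p" using vanishes_long[of a p] a4 a1 by simp
        then have "vanishes (p - 3) a" using vanishes_back_short[of a "p - 3"] a1 a4 by simp
        then show ?thesis using vanishes_to_last[OF a1 a4] 4 by simp
      qed
    qed
  qed
qed

lemma vanishes_back_long:
  assumes h: "3 \<le> J" "J < I" "I \<le> p" and hyp: "vanishes (J - 3) I"
  shows "vanishes I J"
  unfolding vanishes_def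
proof (intro ballI impI)
  fix x y assume x: "x \<in> S I" and y: "y \<in> S J" and xy: "x \<noteq> y"
  let ?r = "rep(I := x, J := y)" and ?s = "alt(I := other I x, J := other J y)"
  have sel: "is_selection ?r ?s" unfolding is_selection_def
    using h x y rep_mem alt_mem other_mem[of I x] other_mem[of J y] by auto
  have ne: "J - 3 \<noteq> I" "J - 3 \<noteq> J" "J - Suc (Suc (Suc 0)) = J - 3" using h by auto
  define ws where "ws = layer_run 0 (J - 2) @ [(I, False)] @ layer_run J I @ [(I, True)] @ layer_run (I + 1) (p + 2)"
  have W: "is_template ws" unfolding is_template_def ws_def using h p_ge_4 by (auto simp: mem_layer_run)
  have D: "adj_sum layer_jump ws = 1"
    unfolding ws_def using h p_ge_4 by (simp add: adj_sum_append adj_sum_Cons layer_jump_def jump_coeff_def; arith)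
  have "adj_sum (rw_pick ?r ?s) ws = rw (rep (J - 3)) x + rw x y + rw (?r (I - 1)) (?s I) + rw (?s I) (?r (I + 1))"
    unfolding ws_def using h ne rw_pick_run[OF sel] by (simp add: adj_sum_append adj_sum_Cons rw_pick_def)
  moreover have "rw (rep (J - 3)) x = 0"
    using vanishes_rw[OF hyp rep_mem[of "J - 3"] x] h by simp
  moreover have "rw (?r (I - 1)) (?s I) = 0"
    using rw_selection_next_alt[OF sel, of "I - 1"] h by simp
  moreover have "rw (?s I) (?r (I + 1)) = 0"
    using rw_selection_alt_next[OF sel, of I] h by simp
  ultimately show "rw x y = 0" using rw_tight_template[OF sel W D] by simp
qed

lemma vanishes_backward:
  assumes h: "1 \<le> b" "b < a" "a \<le> p"
  shows "vanishes a b"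
proof (cases "a \<le> p - 2")
  case True
  have "vanishes b (a + 3)" using vanishes_forward[of b "a + 3"] h True by simp
  then show ?thesis using vanishes_back_short[of b a] h True by simp
next
  case False
  then have a2: "a = p - 1 \<or> a = p" using h by auto
  consider "3 \<le> b" | "b = 1" | "b = 2" using h by linarith
  then show ?thesis
  proof cases
    case 1
    have "vanishes (b - 3) a" using vanishes_forward[of "b - 3" a] h 1 by simp
    then show ?thesis using vanishes_back_long[of b a] h 1 by simp
  next
    case 2
    have "vanishes 0 a" using vanishes_forward[of 0 a] a2 p_ge_4 by auto
    then show ?thesis using vanishes_back_to_1[of a] a2 2 by simp
  next
    case 3
    show ?thesis
    proof (cases "a = p")
      case True
      have "vanishes 0 p" using vanishes_forward[of 0 p] p_ge_4 by simp
      then show ?thesis using vanishes_p_2 True 3 by simp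
    next
      case False
      then have ap: "a = p - 1" using a2 by simp
      have "vanishes 0 (p - 1)" using vanishes_forward[of 0 "p - 1"] p_ge_4 by simp
      then show ?thesis using vanishes_p_minus_1_2 ap 3 by simp
    qed
  qed
qed

lemma rw_arc:
  assumes e: "(x, y) \<in> arcs n"
  shows "rw x y = 0"
proof -
  have le: "x \<le> n" "y \<le> n" and xy: "x \<noteq> y" "y \<noteq> 0" "x \<noteq> n" "\<not> (x = 0 \<and> y = n)"
    using e unfolding arcs_def by auto
  define a where "a = layer x"
  define b where "b = layer y"
  have xa: "x \<in> S a" "a \<le> p + 1" using layer_mem[OF le(1)] a_def by auto
  have yb: "y \<in> S b" "b \<le> p + 1" using layer_mem[OF le(2)] b_def by auto
  have ap: "a \<le> p" using xa layer_eq_last_iff[OF le(1)] xy(3) a_def by (cases "a = p + 1") auto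
  have b1: "1 \<le> b" using layer_eq_0_iff[OF le(2)] xy(2) b_def by (cases "b = 0") auto
  have nz: "\<not> (a = 0 \<and> b = p + 1)"
  proof
    assume "a = 0 \<and> b = p + 1"
    then have "x = 0" "y = n" using xa yb S_0 S_last by auto
    then show False using xy(4) by simp
  qed
  consider "b = a + 1" | "a + 2 \<le> b" | "b = a" | "b < a" by linarith
  then show ?thesis
  proof cases
    case 1 then show ?thesis using vanishesD[OF vanishes_next[OF ap] xa(1)] yb xy by simp
  next
    case 2 show ?thesis using vanishesD[OF vanishes_forward[OF 2 yb(2) nz] xa(1) yb(1) xy(1)] .
  next
    case 3 then show ?thesis using vanishesD[OF vanishes_same[of a] xa(1)] yb xy b1 ap by simp
  next
    case 4 show ?thesis using vanishesD[OF vanishes_backward[OF b1 4 ap] xa(1) yb(1) xy(1)] .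
  qed
qed

lemma tight_weight_path:
  assumes P: "is_pPath n p vs"
  shows "adj_sum (\<lambda>u v. w (u, v)) vs = K + beta * (jump_count vs - 1)"
proof -
  have "adj_sum rw vs = adj_sum (\<lambda>u v. 0) vs"
  proof (rule adj_sum_cong)
    fix k assume "Suc k < length vs"
    then have "k < p" using P by (simp add: is_pPath_def)
    then show "rw (vs ! k) (vs ! Suc k) = 0" using rw_arc path_arc[OF P] by simp
  qed
  then show ?thesis
    using path_weight_split[OF P] tight_constant by (simp add: adj_sum_const algebra_simps)
qed

end

lemma (in jump_partition) linear_affine_in_jump_lhs:
  assumes g: "linear g"
    and tight: "\<And>x. x \<in> {incidence vs | vs. is_pPath n p vs} \<Longrightarrow> jump_lhs n p S x = 1 \<Longrightarrow> g x = K"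
  shows "\<exists>\<beta>. \<forall>x\<in>{incidence vs | vs. is_pPath n p vs}. g x = K + \<beta> * (jump_lhs n p S x - 1)"
proof -
  have incidence: "g (incidence vs) = adj_sum (\<lambda>u v. g (indicator {(u, v)})) vs"
    if "is_pPath n p vs" for vs
    using linear_incidence[OF g] that by (simp add: is_pPath_def)
  have "adj_sum (\<lambda>u v. g (indicator {(u, v)})) vs = K"
    if "is_pPath n p vs" "jump_count vs = 1" for vs
    using tight[of "incidence vs"] that incidence jump_lhs_incidence by auto
  then interpret tight_weight n p S "\<lambda>e. g (indicator {e})" K
    by unfold_locales
  have "g (incidence vs) = K + beta * (jump_lhs n p S (incidence vs) - 1)" if "is_pPath n p vs" for vs
    using that tight_weight_path incidence jump_lhs_incidence by simp
  then show ?thesis by blast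
qed

theorem mainTheorem10:
  fixes n p :: nat and S :: "nat \<Rightarrow> nat set"
  assumes "n > 0"
    and "p \<ge> 4"
    and "\<And>i. i \<le> p + 1 \<Longrightarrow> S i \<subseteq> {0..n}"
    and "(\<Union>i\<in>{0..p+1}. S i) = {0..n}"
    and "\<And>i j. i \<le> p + 1 \<Longrightarrow> j \<le> p + 1 \<Longrightarrow> i \<noteq> j \<Longrightarrow> S i \<inter> S j = {}"
    and "S 0 = {0}"
    and "S (p + 1) = {n}"
    and "\<And>i. 1 \<le> i \<Longrightarrow> i \<le> p \<Longrightarrow> card (S i) \<ge> 2"
  shows "(\<forall>x\<in>pathPolytope n p. jump_lhs n p S x \<ge> 1)
    \<and> is_facet {x \<in> pathPolytope n p. jump_lhs n p S x = 1} (pathPolytope n p)"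
proof -
  interpret jump_partition n p S
    using assms(2-8) by unfold_locales auto
  define X where "X = {incidence vs | vs. is_pPath n p vs}"
  have X_ge: "1 \<le> jump_lhs n p S x" if "x \<in> X" for x
    using that jump_count_ge_1 jump_lhs_incidence by (auto simp: X_def)
  obtain t where t: "is_pPath n p t" "jump_count t = 1"
    using exists_tight_path by blast
  obtain d where d: "is_pPath n p d" "jump_count d = 2"
    using exists_path_jump_count_2 by blast
  have "is_facet {x \<in> convex hull X. jump_lhs n p S x = 1} (convex hull X)"
  proof (rule is_facet_convex_hull_level[of X _ "incidence t" "incidence d", OF _ linear_jump_lhs X_ge])
    show "finite X"
      using finite_pPaths[of n p] by (simp add: X_def Setcompr_eq_image)
  qed (use t d jump_lhs_incidence linear_affine_in_jump_lhs in \<open>auto simp: X_def\<close>)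
  moreover have "\<forall>x\<in>convex hull X. 1 \<le> jump_lhs n p S x"
    using convex_hull_linear_ge[OF linear_jump_lhs X_ge] by blast
  ultimately show ?thesis
    by (simp add: pathPolytope_def X_def)
qed

end
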